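(* Let $n>2$ and let $f$ be a Perazzo form of degree $d$ in $S$. (1) If $d=n+1$, then the $h$-vector of $A_f$ is $(1,n+3,n+3,\dots,n+3,1)$ and $A_f$ fails the weak Lefschetz property. (2) If $d=n+2$, then the $h$-vector of $A_f$ is $(1,n+3,n+4,\dots,n+4,n+3,1)$ and $A_f$ fails the weak Lefschetz property.
   Context: $K$ is an algebraically closed field of characteristic zero. $S=K[x_0,\dots,x_n,u,v]$ and $R=K[y_0,\dots,y_n,U,V]$ acts on $S$ by differentiation ($y_i=\partial/\partial x_i$, $U=\partial/\partial u$, $V=\partial/\partial v$). A Perazzo form of degree $d$ is $f=x_0p_0+x_1p_1+\cdots+x_np_n+g$ where $p_0,\dots,p_n\in K[u,v]_{d-1}$ are linearly independent but algebraically dependent forms and $g\in K[u,v]_d$. $\operatorname{Ann}_R(f)=\{\theta\in R:\theta\circ f=0\}$ and $A_f=R/\operatorname{Ann}_R(f)$ is a graded artinian Gorenstein algebra of socle degree $d$; its $h$-vector is $h_i=\dim_K [A_f]_i$. A graded artinian algebra $A$ has the weak Lefschetz property (WLP) if there is $\ell\in[A]_1$ such that multiplication $\times\ell:[A]_i\to[A]_{i+1}$ has maximal rank (is injective or surjective) for every $i\ge 0$. *)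

theory Defs
  imports "HOL-Library.Poly_Mapping" "HOL-Computational_Algebra.Polynomial"
begin

(* In S = K[x_0..x_n,u,v] the variable x_i has index i,
   u has index n+1 and v has index n+2.  R = K[y_0..y_n,U,V] is represented by the
   same type with y_i, U, V carrying the same indices as x_i, u, v. *)
type_synonym 'a mpoly = "(nat \<Rightarrow>\<^sub>0 nat) \<Rightarrow>\<^sub>0 'a"

definition algebraically_closed :: "'a::field itself \<Rightarrow> bool" where
  "algebraically_closed _ \<longleftrightarrow> (\<forall>p::'a poly. degree p > 0 \<longrightarrow> (\<exists>x. poly p x = 0))"

definition mono_deg :: "(nat \<Rightarrow>\<^sub>0 nat) \<Rightarrow> nat" where
  "mono_deg a = (\<Sum>j\<in>Poly_Mapping.keys a. Poly_Mapping.lookup a j)"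

definition mconst :: "'a::comm_ring_1 \<Rightarrow> 'a mpoly" where
  "mconst c = Poly_Mapping.single 0 c"

definition mvar :: "nat \<Rightarrow> 'a::comm_ring_1 mpoly" where
  "mvar i = Poly_Mapping.single (Poly_Mapping.single i 1) 1"

(* p is a form of degree k involving only variables with index in V
   (the zero polynomial is a form of every degree) *)
definition homog_in :: "nat set \<Rightarrow> nat \<Rightarrow> 'a::comm_ring_1 mpoly \<Rightarrow> bool" where
  "homog_in V k p \<longleftrightarrow> (\<forall>a\<in>Poly_Mapping.keys p. Poly_Mapping.keys a \<subseteq> V \<and> mono_deg a = k)"

definition mono_le :: "(nat \<Rightarrow>\<^sub>0 nat) \<Rightarrow> (nat \<Rightarrow>\<^sub>0 nat) \<Rightarrow> bool" where
  "mono_le a b \<longleftrightarrow> (\<forall>j. Poly_Mapping.lookup a j \<le> Poly_Mapping.lookup b j)"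

(* coefficient c with  \<partial>^a (x^b) = c * x^(b-a)  for a \<le> b *)
definition diff_coeff :: "(nat \<Rightarrow>\<^sub>0 nat) \<Rightarrow> (nat \<Rightarrow>\<^sub>0 nat) \<Rightarrow> nat" where
  "diff_coeff a b = (\<Prod>j\<in>Poly_Mapping.keys a. fact (Poly_Mapping.lookup b j) div fact (Poly_Mapping.lookup b j - Poly_Mapping.lookup a j))"

(* the action  \<theta> \<circ> f  of R on S by differentiation (y_i = \<partial>/\<partial>x_i, etc.) *)
definition diff_act :: "'a::comm_ring_1 mpoly \<Rightarrow> 'a mpoly \<Rightarrow> 'a mpoly" where
  "diff_act \<theta> f = (\<Sum>a\<in>Poly_Mapping.keys \<theta>. \<Sum>b\<in>Poly_Mapping.keys f.
      if mono_le a b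
      then Poly_Mapping.single (b - a) (Poly_Mapping.lookup \<theta> a * Poly_Mapping.lookup f b * of_nat (diff_coeff a b))
      else 0)"

definition Rdeg :: "nat \<Rightarrow> nat \<Rightarrow> 'a::comm_ring_1 mpoly set" where
  "Rdeg n i = {\<theta>. homog_in {..n+2} i \<theta>}"

definition Ann :: "nat \<Rightarrow> 'a::comm_ring_1 mpoly \<Rightarrow> 'a mpoly set" where
  "Ann n f = {\<theta>. (\<forall>a\<in>Poly_Mapping.keys \<theta>. Poly_Mapping.keys a \<subseteq> {..n+2}) \<and> diff_act \<theta> f = 0}"

(* h_i = dim_K [A_f]_i = dim_K ([R]_i / [Ann_R(f)]_i): the size m of a family
   \<theta>_0..\<theta>_{m-1} in [R]_i whose classes modulo Ann_R(f) form a K-basis of [A_f]_i *)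
definition hvec :: "nat \<Rightarrow> 'a::field mpoly \<Rightarrow> nat \<Rightarrow> nat" where
  "hvec n f i = (THE m. \<exists>\<theta>::nat \<Rightarrow> 'a mpoly.
      (\<forall>j<m. \<theta> j \<in> Rdeg n i) \<and>
      (\<forall>c::nat \<Rightarrow> 'a. (\<Sum>j<m. mconst (c j) * \<theta> j) \<in> Ann n f \<longrightarrow> (\<forall>j<m. c j = 0)) \<and>
      (\<forall>\<psi>\<in>Rdeg n i. \<exists>c::nat \<Rightarrow> 'a. \<psi> - (\<Sum>j<m. mconst (c j) * \<theta> j) \<in> Ann n f))"

(* A_f = R/Ann_R(f) has the WLP: there is l \<in> [A_f]_1 (the class of a linear form of R)
   such that every multiplication map  \<times>l : [A_f]_i \<rightarrow> [A_f]_(i+1)  is injective or surjective *)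
definition has_WLP :: "nat \<Rightarrow> 'a::field mpoly \<Rightarrow> bool" where
  "has_WLP n f \<longleftrightarrow> (\<exists>l\<in>Rdeg n 1. \<forall>i.
      (\<forall>\<theta>\<in>Rdeg n i. l * \<theta> \<in> Ann n f \<longrightarrow> \<theta> \<in> Ann n f) \<or>
      (\<forall>\<psi>\<in>Rdeg n (Suc i). \<exists>\<theta>\<in>Rdeg n i. \<psi> - l * \<theta> \<in> Ann n f))"

definition msubst :: "'a::comm_ring_1 mpoly \<Rightarrow> (nat \<Rightarrow> 'a mpoly) \<Rightarrow> 'a mpoly" where
  "msubst F p = (\<Sum>a\<in>Poly_Mapping.keys F. mconst (Poly_Mapping.lookup F a) * (\<Prod>j\<in>Poly_Mapping.keys a. p j ^ Poly_Mapping.lookup a j))"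

definition is_perazzo :: "nat \<Rightarrow> nat \<Rightarrow> 'a::field mpoly \<Rightarrow> bool" where
  "is_perazzo n d f \<longleftrightarrow> (\<exists>(p::nat \<Rightarrow> 'a mpoly) g.
      (\<forall>i\<le>n. homog_in {n+1, n+2} (d - 1) (p i)) \<and>
      (\<forall>c::nat \<Rightarrow> 'a. (\<Sum>i\<le>n. mconst (c i) * p i) = 0 \<longrightarrow> (\<forall>i\<le>n. c i = 0)) \<and>
      (\<exists>F::'a mpoly. F \<noteq> 0 \<and> (\<forall>a\<in>Poly_Mapping.keys F. Poly_Mapping.keys a \<subseteq> {..n}) \<and> msubst F p = 0) \<and>
      homog_in {n+1, n+2} d g \<and>
      f = (\<Sum>i\<le>n. mvar i * p i) + g)"

end

theory Submission
  imports Defs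
begin

text \<open>
  Write \<open>\<theta> \<circ> f\<close> for the action of \<open>\<theta> \<in> R\<close>, so that \<open>h\<^sub>i\<close> is the dimension of
  \<open>{\<theta> \<circ> f | \<theta> \<in> [R]\<^sub>i}\<close>. A monomial of \<open>R\<close> with two \<open>y\<close>'s kills \<open>f\<close>, one with a single
  \<open>y\<^sub>j\<close> sends \<open>f\<close> to a derivative of \<open>p\<^sub>j\<close>, and a monomial \<open>D\<close> in \<open>U, V\<close> gives
  \<open>D \<circ> f = \<Sum> x\<^sub>j (D \<circ> p\<^sub>j) + D \<circ> g\<close>. Since \<open>n + 1\<close> independent binary forms of degree
  \<open>d - 1 \<in> {n, n + 1}\<close> span all or a hyperplane of the binary forms of that degree, apolarity
  shows that no nonzero binary \<open>D\<close> of degree \<open>i \<le> d - 2\<close> kills all \<open>p\<^sub>j\<close>. Consequently, for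
  \<open>2 \<le> i \<le> d - 2\<close>, \<open>[A\<^sub>f]\<^sub>i\<close> is the direct sum of all binary forms of degree \<open>d - i\<close>
  and of the images of the \<open>i + 1\<close> monomials \<open>U\<^sup>aV\<^sup>i\<^sup>-\<^sup>a\<close>, so \<open>h\<^sub>i = d + 2\<close>; the ends of
  the \<open>h\<close>-vector are computed similarly. Finally, every linear form acts on binary forms through
  its \<open>U, V\<close>-part, which kills some binary form of degree \<open>d - 2\<close>; so multiplication by it from
  degree \<open>2\<close> to degree \<open>3\<close> is not injective, and since \<open>h\<^sub>2 = h\<^sub>3\<close> it is not surjective.
\<close>

section \<open>Polynomials as a vector space\<close>

lemma lookup_mconst_mult: "Poly_Mapping.lookup (mconst c * p) k = c * Poly_Mapping.lookup p k"
proof -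
  have "mconst c * p = Poly_Mapping.map ((*) c) p" by (simp add: mconst_def mult_map_scale_conv_mult)
  then show ?thesis by (simp add: Poly_Mapping.map.rep_eq when_def)
qed

lemma keys_mconst_mult: "Poly_Mapping.keys (mconst c * p) \<subseteq> Poly_Mapping.keys p"
  by (auto simp: in_keys_iff lookup_mconst_mult)

lemma mconst_mult_single: "mconst c * Poly_Mapping.single k x = Poly_Mapping.single k (c * x)"
  by (simp add: mconst_def mult_single)

lemma mconst_add: "mconst (a + b) = mconst a + mconst b"
  by (simp add: mconst_def single_add)

lemma mconst_mult: "mconst (a * b) = mconst a * (mconst b :: 'a::comm_ring_1 mpoly)"
  by (simp add: mconst_def mult_single)

lemma mconst_1: "mconst 1 = (1 :: 'a::comm_ring_1 mpoly)"
  by (rule poly_mapping_eqI) (simp add: mconst_def lookup_one lookup_single when_def)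

lemma mconst_0 [simp]: "mconst 0 = 0"
  by (simp add: mconst_def)

lemma mconst_eq_0_iff: "mconst c = 0 \<longleftrightarrow> c = 0"
  by (metis lookup_single_eq mconst_def mconst_0)

lemma mconst_inverse_cancel: "c \<noteq> 0 \<Longrightarrow> mconst (inverse c) * (mconst c * x) = (x::'a::field mpoly)"
  by (simp add: mult.assoc[symmetric] mconst_mult[symmetric] mconst_1)

interpretation lin: vector_space "\<lambda>c (p::'a::field mpoly). mconst c * p"
  by unfold_locales (simp_all add: distrib_left distrib_right mconst_add mconst_mult mconst_1 mult.assoc)

lemma poly_mapping_sum_single:
  "p = (\<Sum>k\<in>Poly_Mapping.keys p. Poly_Mapping.single k (Poly_Mapping.lookup p k))"
  by (rule poly_mapping_eqI) (simp add: lookup_sum lookup_single when_def in_keys_iff)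

definition lin_indep_fam :: "(nat \<Rightarrow> 'a::field mpoly) \<Rightarrow> nat \<Rightarrow> bool" where
  "lin_indep_fam w m \<longleftrightarrow> (\<forall>c. (\<Sum>j<m. mconst (c j) * w j) = 0 \<longrightarrow> (\<forall>j<m. c j = 0))"

lemma lin_indep_fam_inj:
  assumes "lin_indep_fam w m"
  shows "inj_on w {..<m}"
proof (rule inj_onI, rule ccontr)
  fix j k assume jk: "j \<in> {..<m}" "k \<in> {..<m}" "w j = w k" "j \<noteq> k"
  let ?c = "\<lambda>i. if i = j then 1 else if i = k then -1 else (0::'a)"
  have "(\<Sum>i<m. mconst (?c i) * w i) = (\<Sum>i<m. (if i = j then w j else 0) + (if i = k then - w k else 0))"
    by (rule sum.cong[OF refl]) (use jk in \<open>auto simp: mconst_1 mconst_def[symmetric]\<close>)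
  also have "\<dots> = 0"
    using jk by (simp add: sum.distrib)
  finally have "\<forall>i<m. ?c i = 0"
    using spec[OF assms[unfolded lin_indep_fam_def], of ?c] by blast
  then show False
    using jk by auto
qed

lemma lin_indep_fam_independent:
  assumes "lin_indep_fam w m"
  shows "lin.independent (w ` {..<m})"
proof (rule lin.independent_if_scalars_zero)
  show "finite (w ` {..<m})" by simp
  fix c x assume s: "(\<Sum>x\<in>w ` {..<m}. mconst (c x) * x) = 0" and x: "x \<in> w ` {..<m}"
  have "(\<Sum>x\<in>w ` {..<m}. mconst (c x) * x) = (\<Sum>j<m. mconst (c (w j)) * w j)"
    by (rule sum.reindex[unfolded comp_def]) (rule lin_indep_fam_inj[OF assms])
  with s have "\<forall>j<m. c (w j) = 0"
    using assms unfolding lin_indep_fam_def by metis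
  with x show "c x = 0" by auto
qed

lemma lin_indep_fam_card_le:
  assumes "lin_indep_fam w m" "finite T" "\<And>j. j < m \<Longrightarrow> w j \<in> lin.span T"
  shows "m \<le> card T"
proof -
  have "card (w ` {..<m}) \<le> card T"
    using lin.independent_span_bound[OF assms(2) lin_indep_fam_independent[OF assms(1)]] assms(3) by auto
  then show ?thesis
    using card_image[OF lin_indep_fam_inj[OF assms(1)]] by simp
qed

lemma not_lin_indep_fam:
  assumes "finite T" "card T < m" "\<And>j. j < m \<Longrightarrow> w j \<in> lin.span T"
  obtains c where "(\<Sum>j<m. mconst (c j) * w j) = 0" "\<exists>j<m. c j \<noteq> 0"
proof -
  have "\<not> lin_indep_fam w m"
    using lin_indep_fam_card_le[OF _ assms(1,3)] assms(2) by fastforce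
  then show ?thesis
    using that unfolding lin_indep_fam_def by blast
qed

lemma span_fam_iff:
  fixes w :: "nat \<Rightarrow> 'a::field mpoly"
  shows "x \<in> lin.span (w ` {..<m}) \<longleftrightarrow> (\<exists>c. x = (\<Sum>j<m. mconst (c j) * w j))"
proof
  assume "x \<in> lin.span (w ` {..<m})"
  then show "\<exists>c. x = (\<Sum>j<m. mconst (c j) * w j)"
  proof (induction rule: lin.span_induct_alt)
    case base
    show ?case by (rule exI[of _ "\<lambda>_. 0"]) simp
  next
    case (step c x y)
    then obtain j0 where j0: "j0 < m" "x = w j0" by auto
    from step obtain d where d: "y = (\<Sum>j<m. mconst (d j) * w j)" by blast
    have "(\<Sum>j<m. mconst ((if j = j0 then c else 0) + d j) * w j)
        = (\<Sum>j<m. (if j = j0 then mconst c * w j else 0) + mconst (d j) * w j)"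
      by (rule sum.cong) (auto simp: mconst_add distrib_right)
    also have "\<dots> = (\<Sum>j<m. if j = j0 then mconst c * w j else 0) + y"
      by (simp only: sum.distrib d)
    also have "\<dots> = mconst c * x + y"
      using j0 by (simp add: sum.delta[OF finite_lessThan])
    finally show ?case by (rule exI[of _ "\<lambda>j. (if j = j0 then c else 0) + d j", OF sym])
  qed
next
  assume "\<exists>c. x = (\<Sum>j<m. mconst (c j) * w j)"
  then obtain c where c: "x = (\<Sum>j<m. mconst (c j) * w j)" by blast
  show "x \<in> lin.span (w ` {..<m})"
    unfolding c by (intro lin.span_sum lin.span_scale lin.span_base) auto
qed

lemma sum_lessThan_add: "(\<Sum>j<m1 + m2. F j) = (\<Sum>j<m1. F j) + (\<Sum>j<m2. F (m1 + (j::nat)))"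
  by (induction m2) (simp_all add: add.assoc)

lemma lin_indep_fam_join:
  assumes "\<And>c c'. (\<Sum>j<m1. mconst (c j) * u j) + (\<Sum>j<m2. mconst (c' j) * v j) = 0
                   \<Longrightarrow> (\<forall>j<m1. c j = 0) \<and> (\<forall>j<m2. c' j = 0)"
  shows "lin_indep_fam (\<lambda>j. if j < m1 then u j else v (j - m1)) (m1 + m2)"
  unfolding lin_indep_fam_def
proof (rule allI, rule impI)
  fix c assume "(\<Sum>j<m1 + m2. mconst (c j) * (if j < m1 then u j else v (j - m1))) = 0"
  then have "(\<Sum>j<m1. mconst (c j) * u j) + (\<Sum>j<m2. mconst (c (m1 + j)) * v j) = 0"
    by (simp add: sum_lessThan_add)
  then have "(\<forall>j<m1. c j = 0) \<and> (\<forall>j<m2. c (m1 + j) = 0)" by (rule assms)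
  then show "\<forall>j<m1 + m2. c j = 0"
    by (metis add_diff_inverse_nat nat_add_left_cancel_less)
qed

lemma join_image:
  "(\<lambda>j. if j < (m1::nat) then u j else v (j - m1)) ` {..<m1 + m2} = u ` {..<m1} \<union> v ` {..<m2}"
proof (intro equalityI subsetI)
  fix x assume "x \<in> (\<lambda>j. if j < m1 then u j else v (j - m1)) ` {..<m1 + m2}"
  then obtain j where "j < m1 + m2" "x = (if j < m1 then u j else v (j - m1))" by blast
  then show "x \<in> u ` {..<m1} \<union> v ` {..<m2}"
    by (cases "j < m1") auto
next
  fix x assume "x \<in> u ` {..<m1} \<union> v ` {..<m2}"
  then show "x \<in> (\<lambda>j. if j < m1 then u j else v (j - m1)) ` {..<m1 + m2}"
  proof
    assume "x \<in> u ` {..<m1}"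
    then obtain j where "j < m1" "x = u j" by auto
    then show ?thesis by (intro image_eqI[of _ _ j]) auto
  next
    assume "x \<in> v ` {..<m2}"
    then obtain j where "j < m2" "x = v j" by auto
    then show ?thesis by (intro image_eqI[of _ _ "m1 + j"]) auto
  qed
qed

lemma mono_deg_eq_sum_superset:
  assumes "finite K" "Poly_Mapping.keys a \<subseteq> K"
  shows "mono_deg a = (\<Sum>j\<in>K. Poly_Mapping.lookup a j)"
  unfolding mono_deg_def by (rule sum.mono_neutral_left) (use assms in \<open>auto simp: in_keys_iff\<close>)

lemma mono_deg_add: "mono_deg (a + b) = mono_deg a + mono_deg b"
proof -
  let ?K = "Poly_Mapping.keys a \<union> Poly_Mapping.keys b"
  have "mono_deg (a + b) = (\<Sum>j\<in>?K. Poly_Mapping.lookup (a + b) j)"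
    by (rule mono_deg_eq_sum_superset) (use keys_add[of a b] in auto)
  also have "\<dots> = mono_deg a + mono_deg b"
    by (simp add: lookup_add sum.distrib mono_deg_eq_sum_superset[of ?K])
  finally show ?thesis .
qed

lemma mono_deg_single [simp]: "mono_deg (Poly_Mapping.single j k) = k"
  by (simp add: mono_deg_def)

lemma mono_deg_eq_0_iff: "mono_deg a = 0 \<longleftrightarrow> a = 0"
proof
  assume "mono_deg a = 0"
  then have "\<forall>j\<in>Poly_Mapping.keys a. Poly_Mapping.lookup a j = 0"
    unfolding mono_deg_def by simp
  then show "a = 0"
    by (metis in_keys_iff keys_eq_empty ex_in_conv)
qed (simp add: mono_deg_def)

lemma mono_deg_eq_1_iff: "mono_deg e = 1 \<longleftrightarrow> (\<exists>t. e = Poly_Mapping.single t 1)"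
proof
  assume deg: "mono_deg e = 1"
  then obtain t where t: "t \<in> Poly_Mapping.keys e"
    by (metis keys_eq_empty ex_in_conv mono_deg_eq_0_iff zero_neq_one)
  have "mono_deg e = Poly_Mapping.lookup e t + (\<Sum>j\<in>Poly_Mapping.keys e - {t}. Poly_Mapping.lookup e j)"
    unfolding mono_deg_def using t by (simp add: sum.remove)
  moreover have "Poly_Mapping.lookup e t \<ge> 1"
    using t by (simp add: in_keys_iff)
  ultimately have "Poly_Mapping.lookup e t = 1" "(\<Sum>j\<in>Poly_Mapping.keys e - {t}. Poly_Mapping.lookup e j) = 0"
    using deg by auto
  then have "e = Poly_Mapping.single t 1"
    by (intro poly_mapping_eqI) (auto simp: lookup_single when_def in_keys_iff)
  then show "\<exists>t. e = Poly_Mapping.single t 1" ..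
qed auto

lemma keys_diff_subset: "Poly_Mapping.keys (b - a) \<subseteq> Poly_Mapping.keys (b::nat \<Rightarrow>\<^sub>0 nat)"
  by (auto simp: in_keys_iff lookup_minus)

lemma single_1_eq_iff: "Poly_Mapping.single l (1::nat) = Poly_Mapping.single l' 1 \<longleftrightarrow> l = l'"
  by (metis lookup_single_eq lookup_single_not_eq one_neq_zero)

lemma single_1_add_diff:
  "Poly_Mapping.lookup e j \<noteq> 0 \<Longrightarrow> e = Poly_Mapping.single j 1 + (e - Poly_Mapping.single j (1::nat))"
  by (rule poly_mapping_eqI) (auto simp: lookup_add lookup_minus lookup_single when_def)

lemma mono_le_diff_add: "mono_le a b \<Longrightarrow> (b - a) + a = (b::nat \<Rightarrow>\<^sub>0 nat)"
  by (rule poly_mapping_eqI) (auto simp: mono_le_def lookup_add lookup_minus)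

lemma mono_deg_diff: "mono_le a b \<Longrightarrow> mono_deg (b - a) = mono_deg b - mono_deg a"
  using mono_deg_add[of "b - a" a] mono_le_diff_add[of a b] by simp

lemma mono_deg_mono: "mono_le a b \<Longrightarrow> mono_deg a \<le> mono_deg b"
  using mono_deg_add[of "b - a" a] mono_le_diff_add[of a b] by simp

lemma mono_le_add_iff: "mono_le (a1 + a2) b \<longleftrightarrow> mono_le a2 b \<and> mono_le a1 (b - a2)"
  by (auto simp: mono_le_def lookup_add lookup_minus)
    (metis le_diff_conv2 add.commute le_add2 order_trans)+

definition falling_fact :: "nat \<Rightarrow> nat \<Rightarrow> nat" where
  "falling_fact x y = fact x div fact (x - y)"

lemma falling_fact_mult_fact: "y \<le> x \<Longrightarrow> falling_fact x y * fact (x - y) = fact x"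
  unfolding falling_fact_def by (simp add: fact_dvd)

lemma falling_fact_self: "falling_fact x x = fact x"
  by (simp add: falling_fact_def)

lemma falling_fact_add:
  assumes "y1 + y2 \<le> x"
  shows "falling_fact x (y1 + y2) = falling_fact x y2 * falling_fact (x - y2) y1"
proof -
  have "falling_fact x (y1 + y2) * fact (x - (y1 + y2)) = fact x"
    using assms by (simp add: falling_fact_mult_fact)
  also have "fact x = falling_fact x y2 * fact (x - y2)"
    using assms by (simp add: falling_fact_mult_fact)
  also have "fact (x - y2) = falling_fact (x - y2) y1 * fact (x - y2 - y1)"
    using assms falling_fact_mult_fact[of y1 "x - y2"] by simp
  finally show ?thesis
    by (simp add: algebra_simps)
qed

lemma diff_coeff_eq_prod_superset:
  assumes "finite K" "Poly_Mapping.keys a \<subseteq> K"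
  shows "diff_coeff a b = (\<Prod>j\<in>K. falling_fact (Poly_Mapping.lookup b j) (Poly_Mapping.lookup a j))"
  unfolding diff_coeff_def falling_fact_def[symmetric]
  by (rule prod.mono_neutral_left) (use assms in \<open>auto simp: in_keys_iff falling_fact_def\<close>)

lemma diff_coeff_add:
  assumes "mono_le (a1 + a2) b"
  shows "diff_coeff (a1 + a2) b = diff_coeff a2 b * diff_coeff a1 (b - a2)"
proof -
  let ?K = "Poly_Mapping.keys a1 \<union> Poly_Mapping.keys a2"
  have "diff_coeff (a1 + a2) b
      = (\<Prod>j\<in>?K. falling_fact (Poly_Mapping.lookup b j) (Poly_Mapping.lookup (a1 + a2) j))"
    by (rule diff_coeff_eq_prod_superset) (use keys_add[of a1 a2] in auto)
  also have "\<dots> = (\<Prod>j\<in>?K. falling_fact (Poly_Mapping.lookup b j) (Poly_Mapping.lookup a2 j)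
                        * falling_fact (Poly_Mapping.lookup (b - a2) j) (Poly_Mapping.lookup a1 j))"
    by (rule prod.cong[OF refl])
      (use assms in \<open>auto simp: mono_le_def lookup_add lookup_minus intro!: falling_fact_add\<close>)
  also have "\<dots> = diff_coeff a2 b * diff_coeff a1 (b - a2)"
    by (simp add: prod.distrib diff_coeff_eq_prod_superset[of ?K])
  finally show ?thesis .
qed

section \<open>The action of \<open>R\<close> on \<open>S\<close> by differentiation\<close>

definition diff_mono :: "(nat \<Rightarrow>\<^sub>0 nat) \<Rightarrow> (nat \<Rightarrow>\<^sub>0 nat) \<Rightarrow> 'a::comm_ring_1 \<Rightarrow> 'a mpoly" where
  "diff_mono a b x = (if mono_le a b then Poly_Mapping.single (b - a) (x * of_nat (diff_coeff a b)) else 0)"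

lemma diff_mono_0 [simp]: "diff_mono a b 0 = 0"
  by (simp add: diff_mono_def)

lemma diff_mono_add: "diff_mono a b (x + y) = diff_mono a b x + diff_mono a b y"
  by (simp add: diff_mono_def distrib_right single_add)

lemma diff_mono_scale: "diff_mono a b (c * x) = mconst c * diff_mono a b x"
  by (simp add: diff_mono_def mconst_mult_single mult.assoc)

lemma diff_act_eq_sum_diff_mono:
  "diff_act \<theta> f = (\<Sum>a\<in>Poly_Mapping.keys \<theta>. \<Sum>b\<in>Poly_Mapping.keys f.
      diff_mono a b (Poly_Mapping.lookup \<theta> a * Poly_Mapping.lookup f b))"
  by (simp add: diff_act_def diff_mono_def)

lemma diff_act_eq_sum_superset:
  assumes "finite A" "Poly_Mapping.keys \<theta> \<subseteq> A" "finite B" "Poly_Mapping.keys f \<subseteq> B"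
  shows "diff_act \<theta> f = (\<Sum>a\<in>A. \<Sum>b\<in>B. diff_mono a b (Poly_Mapping.lookup \<theta> a * Poly_Mapping.lookup f b))"
proof -
  have "diff_act \<theta> f = (\<Sum>a\<in>Poly_Mapping.keys \<theta>. \<Sum>b\<in>B.
      diff_mono a b (Poly_Mapping.lookup \<theta> a * Poly_Mapping.lookup f b))"
    unfolding diff_act_eq_sum_diff_mono
    by (rule sum.cong[OF refl], rule sum.mono_neutral_left) (use assms in \<open>auto simp: in_keys_iff\<close>)
  also have "\<dots> = (\<Sum>a\<in>A. \<Sum>b\<in>B. diff_mono a b (Poly_Mapping.lookup \<theta> a * Poly_Mapping.lookup f b))"
    by (rule sum.mono_neutral_left) (use assms in \<open>auto simp: in_keys_iff\<close>)
  finally show ?thesis .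
qed

lemma diff_act_single:
  "diff_act (Poly_Mapping.single a c) (Poly_Mapping.single b e) = diff_mono a b (c * e)"
  by (subst diff_act_eq_sum_superset[of "{a}" _ "{b}"]) auto

lemma diff_act_0_left [simp]: "diff_act 0 f = 0"
  by (simp add: diff_act_def)

lemma diff_act_0_right [simp]: "diff_act \<theta> 0 = 0"
  by (simp add: diff_act_def)

lemma diff_act_add_left: "diff_act (\<theta>1 + \<theta>2) f = diff_act \<theta>1 f + diff_act \<theta>2 f"
proof -
  let ?A = "Poly_Mapping.keys \<theta>1 \<union> Poly_Mapping.keys \<theta>2" and ?B = "Poly_Mapping.keys f"
  have "diff_act \<theta> f = (\<Sum>a\<in>?A. \<Sum>b\<in>?B. diff_mono a b (Poly_Mapping.lookup \<theta> a * Poly_Mapping.lookup f b))"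
    if "\<theta> \<in> {\<theta>1 + \<theta>2, \<theta>1, \<theta>2}" for \<theta>
    by (rule diff_act_eq_sum_superset) (use that keys_add[of \<theta>1 \<theta>2] in auto)
  then show ?thesis
    by (simp add: lookup_add distrib_right diff_mono_add sum.distrib)
qed

lemma diff_act_add_right: "diff_act \<theta> (f1 + f2) = diff_act \<theta> f1 + diff_act \<theta> f2"
proof -
  let ?A = "Poly_Mapping.keys \<theta>" and ?B = "Poly_Mapping.keys f1 \<union> Poly_Mapping.keys f2"
  have "diff_act \<theta> f = (\<Sum>a\<in>?A. \<Sum>b\<in>?B. diff_mono a b (Poly_Mapping.lookup \<theta> a * Poly_Mapping.lookup f b))"
    if "f \<in> {f1 + f2, f1, f2}" for f
    by (rule diff_act_eq_sum_superset) (use that keys_add[of f1 f2] in auto)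
  then show ?thesis
    by (simp add: lookup_add distrib_left diff_mono_add sum.distrib)
qed

lemma diff_act_scale_left: "diff_act (mconst c * \<theta>) f = mconst c * diff_act \<theta> f"
proof -
  have "diff_act (mconst c * \<theta>) f = (\<Sum>a\<in>Poly_Mapping.keys \<theta>. \<Sum>b\<in>Poly_Mapping.keys f.
      diff_mono a b (Poly_Mapping.lookup (mconst c * \<theta>) a * Poly_Mapping.lookup f b))"
    by (rule diff_act_eq_sum_superset) (use keys_mconst_mult in auto)
  then show ?thesis
    unfolding diff_act_eq_sum_diff_mono[of \<theta> f]
    by (simp add: lookup_mconst_mult mult.assoc diff_mono_scale sum_distrib_left)
qed

lemma diff_act_scale_right: "diff_act \<theta> (mconst c * f) = mconst c * diff_act \<theta> f"
proof -
  have "diff_act \<theta> (mconst c * f) = (\<Sum>a\<in>Poly_Mapping.keys \<theta>. \<Sum>b\<in>Poly_Mapping.keys f.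
      diff_mono a b (Poly_Mapping.lookup \<theta> a * Poly_Mapping.lookup (mconst c * f) b))"
    by (rule diff_act_eq_sum_superset) (use keys_mconst_mult in auto)
  then show ?thesis
    unfolding diff_act_eq_sum_diff_mono[of \<theta> f]
    by (simp add: lookup_mconst_mult mult.left_commute diff_mono_scale sum_distrib_left)
qed

lemma diff_act_sum_left: "diff_act (\<Sum>i\<in>I. \<theta> i) f = (\<Sum>i\<in>I. diff_act (\<theta> i) f)"
  by (induction I rule: infinite_finite_induct) (simp_all add: diff_act_add_left)

lemma diff_act_sum_right: "diff_act \<theta> (\<Sum>i\<in>I. f i) = (\<Sum>i\<in>I. diff_act \<theta> (f i))"
  by (induction I rule: infinite_finite_induct) (simp_all add: diff_act_add_right)

lemma diff_act_lincomb:
  "diff_act (\<Sum>j\<in>I. mconst (c j) * \<theta> j) f = (\<Sum>j\<in>I. mconst (c j) * diff_act (\<theta> j) f)"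
  by (simp add: diff_act_sum_left diff_act_scale_left)

lemma diff_act_diff_left: "diff_act (\<theta>1 - \<theta>2) f = diff_act \<theta>1 f - diff_act \<theta>2 f"
  using diff_act_add_left[of "\<theta>1 - \<theta>2" \<theta>2 f] by (simp add: algebra_simps)

lemma diff_act_in_span:
  assumes "\<And>x. x \<in> B \<Longrightarrow> diff_act D x = 0" "y \<in> lin.span B"
  shows "diff_act D y = 0"
  using assms(2)
proof (induction rule: lin.span_induct_alt)
  case (step c x y)
  then show ?case
    using assms(1) by (simp add: diff_act_add_right diff_act_scale_right)
qed simp

lemma diff_act_single_add:
  "diff_act (Poly_Mapping.single (a1 + a2) (c1 * c2)) (Poly_Mapping.single b e)
   = diff_act (Poly_Mapping.single a1 c1) (diff_act (Poly_Mapping.single a2 c2) (Poly_Mapping.single b e))"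
proof (cases "mono_le (a1 + a2) b")
  case True
  then have "mono_le a2 b" "mono_le a1 (b - a2)"
    by (simp_all add: mono_le_add_iff)
  moreover have "b - (a1 + a2) = b - a2 - a1"
    by (simp add: diff_diff_add add.commute)
  ultimately show ?thesis
    using True by (simp add: diff_act_single diff_mono_def diff_coeff_add mult.assoc mult.left_commute)
next
  case False
  then show ?thesis
    by (cases "mono_le a2 b") (auto simp: diff_act_single diff_mono_def mono_le_add_iff)
qed

lemma sum_reverse3: "(\<Sum>a\<in>A. \<Sum>b\<in>B. \<Sum>c\<in>C. g a b c) = (\<Sum>c\<in>C. \<Sum>b\<in>B. \<Sum>a\<in>A. g a b c)"
proof -
  have "(\<Sum>a\<in>A. \<Sum>b\<in>B. \<Sum>c\<in>C. g a b c) = (\<Sum>a\<in>A. \<Sum>c\<in>C. \<Sum>b\<in>B. g a b c)"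
    by (rule sum.cong[OF refl], rule sum.swap)
  also have "\<dots> = (\<Sum>c\<in>C. \<Sum>a\<in>A. \<Sum>b\<in>B. g a b c)"
    by (rule sum.swap)
  also have "\<dots> = (\<Sum>c\<in>C. \<Sum>b\<in>B. \<Sum>a\<in>A. g a b c)"
    by (rule sum.cong[OF refl], rule sum.swap)
  finally show ?thesis .
qed

lemma diff_act_mult: "diff_act (\<theta>1 * \<theta>2) h = diff_act \<theta>1 (diff_act \<theta>2 h)"
proof -
  let ?K1 = "Poly_Mapping.keys \<theta>1" and ?K2 = "Poly_Mapping.keys \<theta>2" and ?Kh = "Poly_Mapping.keys h"
  let ?l1 = "Poly_Mapping.lookup \<theta>1" and ?l2 = "Poly_Mapping.lookup \<theta>2" and ?lh = "Poly_Mapping.lookup h"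
  have prod: "\<theta>1 * \<theta>2 = (\<Sum>a1\<in>?K1. \<Sum>a2\<in>?K2. Poly_Mapping.single (a1 + a2) (?l1 a1 * ?l2 a2))"
    by (subst (1 2) poly_mapping_sum_single) (simp add: sum_product mult_single)
  have "diff_act (\<theta>1 * \<theta>2) h = (\<Sum>a1\<in>?K1. \<Sum>a2\<in>?K2. \<Sum>b\<in>?Kh.
      diff_act (Poly_Mapping.single (a1 + a2) (?l1 a1 * ?l2 a2)) (Poly_Mapping.single b (?lh b)))"
    by (subst prod, subst (1) poly_mapping_sum_single[of h])
      (simp only: diff_act_sum_left diff_act_sum_right sum.swap[of _ ?Kh])
  also have "\<dots> = (\<Sum>a1\<in>?K1. \<Sum>a2\<in>?K2. \<Sum>b\<in>?Kh. diff_act (Poly_Mapping.single a1 (?l1 a1))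
      (diff_act (Poly_Mapping.single a2 (?l2 a2)) (Poly_Mapping.single b (?lh b))))"
    by (simp only: diff_act_single_add)
  also have "\<dots> = diff_act (\<Sum>a1\<in>?K1. Poly_Mapping.single a1 (?l1 a1))
      (diff_act (\<Sum>a2\<in>?K2. Poly_Mapping.single a2 (?l2 a2)) (\<Sum>b\<in>?Kh. Poly_Mapping.single b (?lh b)))"
    by (simp only: diff_act_sum_left diff_act_sum_right) (rule sum_reverse3)
  finally show ?thesis
    by (simp only: poly_mapping_sum_single[symmetric])
qed

lemma diff_act_1: "diff_act 1 q = q"
proof -
  have "diff_act 1 (Poly_Mapping.single b x) = Poly_Mapping.single b x" for b and x :: 'a
    using diff_act_single[of 0 1 b x]
    by (simp add: diff_mono_def mono_le_def diff_coeff_def)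
  then have "diff_act 1 q = (\<Sum>b\<in>Poly_Mapping.keys q. Poly_Mapping.single b (Poly_Mapping.lookup q b))"
    by (subst (1) poly_mapping_sum_single[of q]) (simp add: diff_act_sum_right)
  then show ?thesis
    by (simp only: poly_mapping_sum_single[symmetric])
qed

definition var_free :: "nat \<Rightarrow> 'a::comm_ring_1 mpoly \<Rightarrow> bool" where
  "var_free j q \<longleftrightarrow> (\<forall>e\<in>Poly_Mapping.keys q. Poly_Mapping.lookup e j = 0)"

lemma mvar_mult_eq_sum:
  "mvar k * h = (\<Sum>b\<in>Poly_Mapping.keys h. Poly_Mapping.single (Poly_Mapping.single k 1 + b) (Poly_Mapping.lookup h b))"
  by (subst (1) poly_mapping_sum_single[of h]) (simp add: sum_distrib_left mvar_def mult_single)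

lemma mvar_mult_mconst: "mvar l * mconst c = Poly_Mapping.single (Poly_Mapping.single l 1) c"
  by (simp add: mvar_def mconst_def mult_single)

lemma lookup_sum_mvar_mult_mconst:
  assumes "l0 < r"
  shows "Poly_Mapping.lookup (\<Sum>l<r. mvar l * mconst (\<kappa> l)) (Poly_Mapping.single l0 1) = \<kappa> l0"
proof -
  have "Poly_Mapping.lookup (\<Sum>l<r. mvar l * mconst (\<kappa> l)) (Poly_Mapping.single l0 1)
      = (\<Sum>l<r. if l = l0 then \<kappa> l else 0)"
    unfolding lookup_sum mvar_mult_mconst
    by (rule sum.cong[OF refl]) (auto simp: lookup_single when_def single_1_eq_iff single_1_eq_iff[simplified])
  then show ?thesis
    using assms by simp
qed

lemma var_free_mvar_mult: "k \<noteq> j \<Longrightarrow> var_free j h \<Longrightarrow> var_free j (mvar k * h)"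
  unfolding var_free_def mvar_mult_eq_sum
  by (auto dest!: subsetD[OF keys_sum] simp: lookup_add lookup_single split: if_splits)

lemma diff_mvar_var_free: "var_free j q \<Longrightarrow> diff_act (mvar j) q = 0"
  unfolding diff_act_eq_sum_diff_mono mvar_def var_free_def
  by (auto simp: diff_mono_def mono_le_def intro!: sum.neutral dest!: spec[of _ j])

lemma diff_mvar_mvar_mult: "var_free j h \<Longrightarrow> diff_act (mvar j) (mvar j * h) = h"
proof -
  assume h: "var_free j h"
  have "diff_act (mvar j) (Poly_Mapping.single (Poly_Mapping.single j 1 + b) x) = Poly_Mapping.single b x"
    if "b \<in> Poly_Mapping.keys h" for b and x :: 'a
  proof -
    have "Poly_Mapping.lookup b j = 0"
      using h that unfolding var_free_def by blast
    then have "diff_coeff (Poly_Mapping.single j 1) (Poly_Mapping.single j 1 + b) = 1"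
      by (simp add: diff_coeff_def lookup_add)
    moreover have "mono_le (Poly_Mapping.single j 1) (Poly_Mapping.single j 1 + b)"
      by (simp add: mono_le_def lookup_add)
    ultimately show ?thesis
      unfolding mvar_def diff_act_single diff_mono_def by simp
  qed
  then have "diff_act (mvar j) (mvar j * h)
      = (\<Sum>b\<in>Poly_Mapping.keys h. Poly_Mapping.single b (Poly_Mapping.lookup h b))"
    by (simp add: mvar_mult_eq_sum diff_act_sum_right)
  then show ?thesis
    by (simp only: poly_mapping_sum_single[symmetric])
qed

lemma diff_mono_single_1_add:
  assumes "Poly_Mapping.lookup a k = 0"
  shows "diff_mono a (Poly_Mapping.single k 1 + b) x = mvar k * diff_mono a b x"
proof -
  have "mono_le a (Poly_Mapping.single k 1 + b) \<longleftrightarrow> mono_le a b"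
    unfolding mono_le_def using assms
    by (metis (no_types, lifting) add_0 add_increasing lookup_add lookup_single_not_eq zero_le)
  moreover have "(Poly_Mapping.single k 1 + b) - a = Poly_Mapping.single k 1 + (b - a)"
    by (rule poly_mapping_eqI) (use assms in \<open>auto simp: lookup_add lookup_minus lookup_single when_def\<close>)
  moreover have "diff_coeff a (Poly_Mapping.single k 1 + b) = diff_coeff a b"
    unfolding diff_coeff_def
    by (rule prod.cong[OF refl]) (use assms in \<open>auto simp: lookup_add lookup_single when_def in_keys_iff\<close>)
  ultimately show ?thesis
    unfolding diff_mono_def by (simp add: mvar_def mult_single)
qed

lemma diff_act_mvar_mult:
  assumes "var_free k D"
  shows "diff_act D (mvar k * h) = mvar k * diff_act D h"
proof -
  have single: "diff_act D (Poly_Mapping.single e x)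
      = (\<Sum>a\<in>Poly_Mapping.keys D. diff_mono a e (Poly_Mapping.lookup D a * x))" for e x
    by (subst diff_act_eq_sum_superset[of _ _ "{e}"]) (auto simp: lookup_single)
  have "diff_act D (mvar k * h) = (\<Sum>b\<in>Poly_Mapping.keys h. \<Sum>a\<in>Poly_Mapping.keys D.
      diff_mono a (Poly_Mapping.single k 1 + b) (Poly_Mapping.lookup D a * Poly_Mapping.lookup h b))"
    by (simp add: mvar_mult_eq_sum diff_act_sum_right single)
  also have "\<dots> = (\<Sum>b\<in>Poly_Mapping.keys h. \<Sum>a\<in>Poly_Mapping.keys D.
      mvar k * diff_mono a b (Poly_Mapping.lookup D a * Poly_Mapping.lookup h b))"
    using assms unfolding var_free_def by (intro sum.cong refl diff_mono_single_1_add) auto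
  also have "\<dots> = mvar k * diff_act D h"
    by (simp add: diff_act_eq_sum_diff_mono sum_distrib_left sum.swap[of _ "Poly_Mapping.keys h"])
  finally show ?thesis .
qed

lemma homog_0 [simp]: "homog_in V k 0"
  by (simp add: homog_in_def)

lemma homog_add: "homog_in V k p \<Longrightarrow> homog_in V k q \<Longrightarrow> homog_in V k (p + q)"
  unfolding homog_in_def using keys_add[of p q] by blast

lemma homog_diff: "homog_in V k p \<Longrightarrow> homog_in V k q \<Longrightarrow> homog_in V k (p - q)"
  unfolding homog_in_def using keys_add[of p "- q"] by (auto simp: keys_minus)

lemma homog_scale: "homog_in V k p \<Longrightarrow> homog_in V k (mconst c * p)"
  unfolding homog_in_def using keys_mconst_mult by blast

lemma homog_sum: "(\<And>i. i \<in> I \<Longrightarrow> homog_in V k (p i)) \<Longrightarrow> homog_in V k (\<Sum>i\<in>I. p i)"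
  by (induction I rule: infinite_finite_induct) (auto intro: homog_add)

lemma homog_subset: "V \<subseteq> W \<Longrightarrow> homog_in V k p \<Longrightarrow> homog_in W k p"
  unfolding homog_in_def by blast

lemma homog_single: "Poly_Mapping.keys e \<subseteq> V \<Longrightarrow> mono_deg e = k \<Longrightarrow> homog_in V k (Poly_Mapping.single e c)"
  unfolding homog_in_def by auto

lemma homog_mvar_iff: "homog_in V 1 (mvar i) \<longleftrightarrow> i \<in> V"
  by (simp add: homog_in_def mvar_def)

lemma homog_var_free: "homog_in V k q \<Longrightarrow> j \<notin> V \<Longrightarrow> var_free j q"
  unfolding homog_in_def var_free_def by (metis in_keys_iff subsetD)

lemma homog_mult: "homog_in V k p \<Longrightarrow> homog_in V k' q \<Longrightarrow> homog_in V (k + k') (p * q)"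
  unfolding homog_in_def
proof
  fix a assume h: "\<forall>a\<in>Poly_Mapping.keys p. Poly_Mapping.keys a \<subseteq> V \<and> mono_deg a = k"
    "\<forall>a\<in>Poly_Mapping.keys q. Poly_Mapping.keys a \<subseteq> V \<and> mono_deg a = k'"
    and "a \<in> Poly_Mapping.keys (p * q)"
  then obtain b c where "a = b + c" "b \<in> Poly_Mapping.keys p" "c \<in> Poly_Mapping.keys q"
    using keys_mult[of p q] by blast
  moreover have "Poly_Mapping.keys b \<subseteq> V" "Poly_Mapping.keys c \<subseteq> V" "mono_deg b = k" "mono_deg c = k'"
    using h \<open>b \<in> _\<close> \<open>c \<in> _\<close> by auto
  ultimately show "Poly_Mapping.keys a \<subseteq> V \<and> mono_deg a = k + k'"
    using keys_add[of b c] by (auto simp: mono_deg_add)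
qed

lemma homog_diff_act:
  fixes q \<theta> :: "'a::comm_ring_1 mpoly"
  assumes hq: "homog_in V k q" and ht: "homog_in W s \<theta>"
  shows "homog_in V (k - s) (diff_act \<theta> q)"
    and "s > k \<Longrightarrow> diff_act \<theta> q = 0"
proof -
  have "homog_in V (k - s) (diff_mono a b x)"
    if "a \<in> Poly_Mapping.keys \<theta>" "b \<in> Poly_Mapping.keys q" for a b and x :: 'a
  proof (cases "mono_le a b")
    case True
    have "Poly_Mapping.keys b \<subseteq> V" "mono_deg b = k" "mono_deg a = s"
      using that hq ht unfolding homog_in_def by auto
    then show ?thesis
      using True keys_diff_subset[of b a] unfolding diff_mono_def homog_in_def
      by (auto simp: mono_deg_diff)
  qed (simp add: diff_mono_def)
  moreover have "diff_mono a b x = 0"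
    if "a \<in> Poly_Mapping.keys \<theta>" "b \<in> Poly_Mapping.keys q" "s > k" for a b and x :: 'a
    using that hq ht mono_deg_mono[of a b] unfolding diff_mono_def homog_in_def by auto
  ultimately show "homog_in V (k - s) (diff_act \<theta> q)" "s > k \<Longrightarrow> diff_act \<theta> q = 0"
    unfolding diff_act_eq_sum_diff_mono by (auto intro!: homog_sum)
qed

lemma homog_0_eq_mconst: "homog_in V 0 q \<Longrightarrow> q = mconst (Poly_Mapping.lookup q 0)"
proof (rule poly_mapping_eqI)
  fix k assume "homog_in V 0 q"
  then have "k \<in> Poly_Mapping.keys q \<Longrightarrow> k = 0"
    unfolding homog_in_def by (auto simp: mono_deg_eq_0_iff)
  then show "Poly_Mapping.lookup q k = Poly_Mapping.lookup (mconst (Poly_Mapping.lookup q 0)) k"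
    by (cases "k = 0") (auto simp: mconst_def lookup_single in_keys_iff)
qed

lemma diff_act_homog_eq_mconst:
  "homog_in V k t \<Longrightarrow> homog_in W k D \<Longrightarrow> diff_act D t = mconst (Poly_Mapping.lookup (diff_act D t) 0)"
  using homog_0_eq_mconst homog_diff_act(1)[of V k t W k D] by simp

lemma sum_mvar_mult_in_span:
  assumes "\<And>l. l < r \<Longrightarrow> x l = mconst (\<kappa> l)"
  shows "(\<Sum>l<r. mvar l * x l) \<in> lin.span ((mvar :: nat \<Rightarrow> 'a::field mpoly) ` {..<r})"
proof (intro lin.span_sum)
  fix l assume "l \<in> {..<r}"
  then have "mvar l * x l = mconst (\<kappa> l) * mvar l"
    using assms by (simp add: mult.commute)
  also have "\<dots> \<in> lin.span (mvar ` {..<r})"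
    using \<open>l \<in> {..<r}\<close> by (intro lin.span_scale lin.span_base) auto
  finally show "mvar l * x l \<in> lin.span (mvar ` {..<r})" .
qed

lemma linear_form_eq_sum:
  assumes "homog_in {..N} 1 (l :: 'a::comm_ring_1 mpoly)"
  shows "l = (\<Sum>t\<le>N. mconst (Poly_Mapping.lookup l (Poly_Mapping.single t 1)) * mvar t)"
proof (rule poly_mapping_eqI)
  fix e
  have sum: "Poly_Mapping.lookup (\<Sum>t\<le>N. mconst (Poly_Mapping.lookup l (Poly_Mapping.single t 1)) * mvar t) e
      = (\<Sum>t\<le>N. if Poly_Mapping.single t 1 = e then Poly_Mapping.lookup l e else 0)"
    unfolding lookup_sum mvar_def mconst_mult_single
    by (intro sum.cong refl) (auto simp: lookup_single when_def)
  show "Poly_Mapping.lookup l e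
      = Poly_Mapping.lookup (\<Sum>t\<le>N. mconst (Poly_Mapping.lookup l (Poly_Mapping.single t 1)) * mvar t) e"
  proof (cases "e \<in> Poly_Mapping.keys l")
    case True
    then have "Poly_Mapping.keys e \<subseteq> {..N}" "mono_deg e = 1"
      using assms unfolding homog_in_def by auto
    moreover obtain t where t: "e = Poly_Mapping.single t 1"
      using \<open>mono_deg e = 1\<close> mono_deg_eq_1_iff by blast
    ultimately have "t \<le> N"
      by simp
    have "(\<Sum>s\<le>N. if Poly_Mapping.single s 1 = e then Poly_Mapping.lookup l e else 0)
        = (\<Sum>s\<le>N. if s = t then Poly_Mapping.lookup l e else 0)"
      using t by (intro sum.cong refl) (auto simp: single_1_eq_iff single_1_eq_iff[simplified])
    then show ?thesis
      unfolding sum using \<open>t \<le> N\<close> by simp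
  next
    case False
    then show ?thesis
      unfolding sum by (simp add: in_keys_iff sum.neutral)
  qed
qed

section \<open>Binary forms in \<open>u\<close> and \<open>v\<close>\<close>

text \<open>\<open>uv_mono n a b\<close> is the monomial \<open>u\<^sup>a v\<^sup>b\<close> of \<open>S\<close>, and equally \<open>U\<^sup>a V\<^sup>b\<close> of \<open>R\<close>.\<close>

definition uv_exp :: "nat \<Rightarrow> nat \<Rightarrow> nat \<Rightarrow> (nat \<Rightarrow>\<^sub>0 nat)" where
  "uv_exp n a b = Poly_Mapping.single (n+1) a + Poly_Mapping.single (n+2) b"

definition uv_mono :: "nat \<Rightarrow> nat \<Rightarrow> nat \<Rightarrow> 'a::comm_ring_1 mpoly" where
  "uv_mono n a b = Poly_Mapping.single (uv_exp n a b) 1"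

definition uv_form :: "nat \<Rightarrow> nat \<Rightarrow> (nat \<Rightarrow> 'a::comm_ring_1) \<Rightarrow> 'a mpoly" where
  "uv_form n k c = (\<Sum>a\<le>k. mconst (c a) * uv_mono n a (k - a))"

definition uv_monos :: "nat \<Rightarrow> nat \<Rightarrow> 'a::comm_ring_1 mpoly set" where
  "uv_monos n k = (\<lambda>a. uv_mono n a (k - a)) ` {..k}"

lemma lookup_uv_exp:
  "Poly_Mapping.lookup (uv_exp n a b) j = (if j = n+1 then a else if j = n+2 then b else 0)"
  by (auto simp: uv_exp_def lookup_add lookup_single when_def)

lemma keys_uv_exp: "Poly_Mapping.keys (uv_exp n a b) \<subseteq> {n+1, n+2}"
  by (auto simp: in_keys_iff lookup_uv_exp split: if_splits)

lemma mono_deg_uv_exp: "mono_deg (uv_exp n a b) = a + b"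
  by (simp add: uv_exp_def mono_deg_add)

lemma uv_exp_of_keys:
  "Poly_Mapping.keys e \<subseteq> {n+1, n+2} \<Longrightarrow> e = uv_exp n (Poly_Mapping.lookup e (n+1)) (Poly_Mapping.lookup e (n+2))"
  by (rule poly_mapping_eqI) (auto simp: lookup_uv_exp in_keys_iff)

lemma mono_le_uv_exp: "mono_le (uv_exp n a b) (uv_exp n a' b') \<longleftrightarrow> a \<le> a' \<and> b \<le> b'"
proof
  assume "mono_le (uv_exp n a b) (uv_exp n a' b')"
  then have "Poly_Mapping.lookup (uv_exp n a b) j \<le> Poly_Mapping.lookup (uv_exp n a' b') j" for j
    unfolding mono_le_def by blast
  from this[of "n+1"] this[of "n+2"] show "a \<le> a' \<and> b \<le> b'"
    by (simp add: lookup_uv_exp)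
qed (auto simp: mono_le_def lookup_uv_exp)

lemma uv_exp_diff: "uv_exp n a' b' - uv_exp n a b = uv_exp n (a' - a) (b' - b)"
  by (rule poly_mapping_eqI) (simp add: lookup_minus lookup_uv_exp)

lemma diff_coeff_uv_exp:
  "diff_coeff (uv_exp n a b) (uv_exp n a' b') = falling_fact a' a * falling_fact b' b"
proof -
  have "diff_coeff (uv_exp n a b) (uv_exp n a' b')
      = (\<Prod>j\<in>{n+1, n+2}. falling_fact (Poly_Mapping.lookup (uv_exp n a' b') j) (Poly_Mapping.lookup (uv_exp n a b) j))"
    by (rule diff_coeff_eq_prod_superset) (use keys_uv_exp[of n a b] in simp_all)
  then show ?thesis
    by (simp add: lookup_uv_exp)
qed

lemma uv_mono_0_0 [simp]: "uv_mono n 0 0 = 1"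
  by (simp add: uv_mono_def uv_exp_def)

lemma uv_mono_nonzero: "uv_mono n a b \<noteq> (0::'a::comm_ring_1 mpoly)"
  unfolding uv_mono_def by (metis lookup_single_eq one_neq_zero lookup_zero)

lemma homog_uv_mono: "k = a + b \<Longrightarrow> homog_in {n+1, n+2} k (uv_mono n a b)"
  unfolding uv_mono_def by (rule homog_single) (use keys_uv_exp[of n a b] mono_deg_uv_exp in simp_all)

lemma diff_act_uv_mono:
  "diff_act (uv_mono n a b) (uv_mono n a' b')
   = (if a \<le> a' \<and> b \<le> b'
      then mconst (of_nat (falling_fact a' a * falling_fact b' b)) * uv_mono n (a' - a) (b' - b) else 0)"
  unfolding uv_mono_def diff_act_single diff_mono_def mono_le_uv_exp uv_exp_diff diff_coeff_uv_exp
  by (simp add: mconst_mult_single)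

lemma lookup_mult_single:
  "Poly_Mapping.lookup (q * Poly_Mapping.single e c) y
   = (if mono_le e y then Poly_Mapping.lookup q (y - e) * c else 0)"
proof -
  have "q * Poly_Mapping.single e c
      = (\<Sum>k\<in>Poly_Mapping.keys q. Poly_Mapping.single (k + e) (Poly_Mapping.lookup q k * c))"
    by (subst (1) poly_mapping_sum_single[of q]) (simp add: sum_distrib_right mult_single)
  then have "Poly_Mapping.lookup (q * Poly_Mapping.single e c) y
      = (\<Sum>k\<in>Poly_Mapping.keys q. if y = k + e then Poly_Mapping.lookup q k * c else 0)"
    by (simp add: lookup_sum lookup_single when_def eq_commute)
  also have "\<dots> = (if mono_le e y then Poly_Mapping.lookup q (y - e) * c else 0)"
  proof (cases "mono_le e y")
    case True
    then have "y = k + e \<longleftrightarrow> k = y - e" for k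
      using mono_le_diff_add[of e y] by (metis add_diff_cancel_right')
    then show ?thesis
      using True by (simp add: sum.delta in_keys_iff)
  next
    case False
    then have "y \<noteq> k + e" for k
      unfolding mono_le_def by (auto simp: lookup_add)
    then show ?thesis
      using False by simp
  qed
  finally show ?thesis .
qed

lemma lookup_mult_uv_mono:
  "Poly_Mapping.lookup (D * uv_mono n s t) (uv_exp n a b)
   = (if s \<le> a \<and> t \<le> b then Poly_Mapping.lookup D (uv_exp n (a - s) (b - t)) else 0)"
  unfolding uv_mono_def lookup_mult_single by (simp add: mono_le_uv_exp uv_exp_diff)

lemma lookup_uv_form: "a \<le> k \<Longrightarrow> Poly_Mapping.lookup (uv_form n k c) (uv_exp n a (k - a)) = c a"
proof -
  assume "a \<le> k"
  have "Poly_Mapping.lookup (uv_form n k c) (uv_exp n a (k - a)) = (\<Sum>a'\<le>k. if a' = a then c a' else 0)"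
    unfolding uv_form_def lookup_sum uv_mono_def mconst_mult_single
    by (rule sum.cong[OF refl]) (auto simp: lookup_single when_def lookup_uv_exp dest: arg_cong[of _ _ "\<lambda>e. Poly_Mapping.lookup e (n+1)"])
  then show ?thesis
    using \<open>a \<le> k\<close> by simp
qed

lemma uv_form_eq_0D: "uv_form n k c = 0 \<Longrightarrow> a \<le> k \<Longrightarrow> c a = 0"
  using lookup_uv_form[of a k n c] by simp

lemma homog_uv_form: "homog_in {n+1, n+2} k (uv_form n k c)"
  unfolding uv_form_def by (intro homog_sum homog_scale homog_uv_mono) auto

lemma uv_form_eq:
  assumes "homog_in {n+1, n+2} k q"
  shows "q = uv_form n k (\<lambda>a. Poly_Mapping.lookup q (uv_exp n a (k - a)))"
proof (rule poly_mapping_eqI)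
  fix e
  show "Poly_Mapping.lookup q e = Poly_Mapping.lookup (uv_form n k (\<lambda>a. Poly_Mapping.lookup q (uv_exp n a (k - a)))) e"
  proof (cases "e \<in> Poly_Mapping.keys q")
    case True
    then have "Poly_Mapping.keys e \<subseteq> {n+1, n+2}" "mono_deg e = k"
      using assms unfolding homog_in_def by auto
    then have "e = uv_exp n (Poly_Mapping.lookup e (n+1)) (k - Poly_Mapping.lookup e (n+1))"
      "Poly_Mapping.lookup e (n+1) \<le> k"
      using uv_exp_of_keys[of e n] mono_deg_uv_exp[of n] by (metis add_diff_cancel_left' le_add1)+
    then show ?thesis
      by (metis lookup_uv_form)
  next
    case False
    then have "Poly_Mapping.lookup (uv_form n k (\<lambda>a. Poly_Mapping.lookup q (uv_exp n a (k - a)))) e = 0"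
      unfolding uv_form_def lookup_sum uv_mono_def mconst_mult_single
      by (intro sum.neutral) (auto simp: lookup_single when_def in_keys_iff)
    then show ?thesis
      using False by (simp add: in_keys_iff)
  qed
qed

lemma single_eq_mconst_mult_uv_mono:
  assumes "Poly_Mapping.keys e \<subseteq> {..n+2}" "\<forall>j\<le>n. Poly_Mapping.lookup e j = 0" "mono_deg e = k"
  obtains a where "a \<le> k" "Poly_Mapping.single e x = mconst x * uv_mono n a (k - a)"
proof -
  have "Poly_Mapping.keys e \<subseteq> {n+1, n+2}"
  proof
    fix t assume t: "t \<in> Poly_Mapping.keys e"
    then have "t \<le> n + 2"
      using assms(1) by auto
    moreover have "\<not> t \<le> n"
      using assms(2) t by (auto simp: in_keys_iff)
    ultimately show "t \<in> {n+1, n+2}"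
      by auto
  qed
  then have e: "e = uv_exp n (Poly_Mapping.lookup e (n+1)) (Poly_Mapping.lookup e (n+2))"
    by (rule uv_exp_of_keys)
  then have k: "Poly_Mapping.lookup e (n+1) + Poly_Mapping.lookup e (n+2) = k"
    using assms(3) mono_deg_uv_exp by metis
  have "Poly_Mapping.single e x = mconst x * uv_mono n (Poly_Mapping.lookup e (n+1)) (k - Poly_Mapping.lookup e (n+1))"
    unfolding uv_mono_def mconst_mult_single using e k by (metis add_diff_cancel_left' mult.right_neutral)
  moreover have "Poly_Mapping.lookup e (n+1) \<le> k"
    using k by simp
  ultimately show ?thesis
    by (rule that[rotated])
qed

lemma single_eq_mvar_mult:
  assumes "Poly_Mapping.keys e \<subseteq> {..N}" "mono_deg e = i" "Poly_Mapping.lookup e j \<noteq> 0"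
  obtains e1 where "Poly_Mapping.single e x = mvar j * Poly_Mapping.single e1 x"
    "Poly_Mapping.keys e1 \<subseteq> {..N}" "mono_deg e1 = i - 1" "1 \<le> i"
proof
  let ?e1 = "e - Poly_Mapping.single j 1"
  have e: "e = Poly_Mapping.single j 1 + ?e1"
    by (rule single_1_add_diff[OF assms(3)])
  show "Poly_Mapping.single e x = mvar j * Poly_Mapping.single ?e1 x"
    by (subst e) (simp add: mvar_def mult_single)
  show "Poly_Mapping.keys ?e1 \<subseteq> {..N}"
    using keys_diff_subset[of e "Poly_Mapping.single j 1"] assms(1) by blast
  have "mono_deg e = 1 + mono_deg ?e1"
    by (subst e) (simp only: mono_deg_add mono_deg_single)
  then show "mono_deg ?e1 = i - 1" "1 \<le> i"
    using assms(2) by simp_all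
qed

lemma exists_uv_coeff_nonzero:
  assumes "homog_in {n+1, n+2} k D" "D \<noteq> 0"
  obtains a where "a \<le> k" "Poly_Mapping.lookup D (uv_exp n a (k - a)) \<noteq> 0"
proof (rule ccontr)
  assume "\<not> thesis"
  then have "\<forall>a\<le>k. Poly_Mapping.lookup D (uv_exp n a (k - a)) = 0"
    using that by blast
  then have "uv_form n k (\<lambda>a. Poly_Mapping.lookup D (uv_exp n a (k - a))) = 0"
    unfolding uv_form_def by (intro sum.neutral) auto
  then show False
    using uv_form_eq[OF assms(1)] assms(2) by simp
qed

text \<open>The largest \<open>a\<close> with a nonzero coefficient at \<open>u\<^sup>a v\<^sup>i\<^sup>-\<^sup>a\<close> in \<open>D\<close> gives a coefficient
  of \<open>D U\<^sup>s\<close> that vanishes in \<open>D V\<^sup>s\<close>.\<close>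

lemma exists_coeff_shifts_differ:
  assumes D: "homog_in {n+1, n+2} i D" "D \<noteq> 0" and "1 \<le> s"
  obtains a where "a \<le> i + s"
    "Poly_Mapping.lookup (D * uv_mono n s 0) (uv_exp n a (i + s - a)) \<noteq> 0"
    "Poly_Mapping.lookup (D * uv_mono n 0 s) (uv_exp n a (i + s - a)) = 0"
proof -
  let ?A = "{a. a \<le> i \<and> Poly_Mapping.lookup D (uv_exp n a (i - a)) \<noteq> 0}"
  define a1 where "a1 = Max ?A"
  have "a1 \<in> ?A"
    unfolding a1_def using exists_uv_coeff_nonzero[OF D] by (intro Max_in) auto
  then have a1: "a1 \<le> i" "Poly_Mapping.lookup D (uv_exp n a1 (i - a1)) \<noteq> 0"
    by auto
  have above_a1: "Poly_Mapping.lookup D (uv_exp n (a1 + s) (i - (a1 + s))) = 0" if "a1 + s \<le> i"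
    using Max_ge[of ?A "a1 + s"] that \<open>1 \<le> s\<close> unfolding a1_def[symmetric] by fastforce
  show ?thesis
  proof (rule that[of "a1 + s"])
    show "a1 + s \<le> i + s"
      using a1 by simp
    have "i + s - (a1 + s) = i - a1"
      by simp
    then show "Poly_Mapping.lookup (D * uv_mono n s 0) (uv_exp n (a1 + s) (i + s - (a1 + s))) \<noteq> 0"
      using a1 by (simp add: lookup_mult_uv_mono)
    show "Poly_Mapping.lookup (D * uv_mono n 0 s) (uv_exp n (a1 + s) (i + s - (a1 + s))) = 0"
    proof (cases "s \<le> i + s - (a1 + s)")
      case True
      then have "a1 + s \<le> i" "i + s - (a1 + s) - s = i - (a1 + s)"
        using a1(1) by auto
      then show ?thesis
        using above_a1 True by (simp add: lookup_mult_uv_mono)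
    qed (simp add: lookup_mult_uv_mono)
  qed
qed

lemma finite_uv_monos: "finite (uv_monos n k)"
  by (simp add: uv_monos_def)

lemma card_uv_monos: "card (uv_monos n k) \<le> k + 1"
  unfolding uv_monos_def using card_image_le[of "{..k}" "\<lambda>a. uv_mono n a (k - a)"] by simp

lemma uv_form_in_span: "uv_form n k c \<in> lin.span (uv_monos n k)"
  unfolding uv_form_def uv_monos_def by (intro lin.span_sum lin.span_scale lin.span_base) auto

lemma homog_uv_in_span: "homog_in {n+1, n+2} k q \<Longrightarrow> q \<in> lin.span (uv_monos n k)"
  using uv_form_eq[of n k q] uv_form_in_span by metis

lemma lin_indep_fam_homog_uv_le:
  fixes w :: "nat \<Rightarrow> 'a::field mpoly"
  assumes "lin_indep_fam w m" "\<And>j. j < m \<Longrightarrow> homog_in {n+1, n+2} k (w j)"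
  shows "m \<le> k + 1"
proof -
  have "m \<le> card (uv_monos n k :: 'a mpoly set)"
    by (rule lin_indep_fam_card_le[OF assms(1) finite_uv_monos]) (rule homog_uv_in_span[OF assms(2)])
  then show ?thesis
    using card_uv_monos[of n k, where 'a='a] by linarith
qed

lemma exists_uv_comb_eq_0:
  fixes w :: "nat \<Rightarrow> 'a::field mpoly"
  assumes "\<And>j. j < m \<Longrightarrow> homog_in {n+1, n+2} k (w j)" "k + 1 < m"
  obtains c where "(\<Sum>j<m. mconst (c j) * w j) = 0" "\<exists>j<m. c j \<noteq> 0"
  using lin_indep_fam_homog_uv_le[of w m n k] assms unfolding lin_indep_fam_def by fastforce

text \<open>Apolarity: \<open>U\<^sup>a V\<^sup>k\<^sup>-\<^sup>a\<close> and \<open>u\<^sup>a v\<^sup>k\<^sup>-\<^sup>a\<close> are, up to the factor \<open>a! (k - a)!\<close>,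
  dual bases of the forms of degree \<open>k\<close>.\<close>

lemma apolar_pairing:
  assumes "homog_in {n+1, n+2} k D" "a0 \<le> k"
  shows "diff_act D (uv_mono n a0 (k - a0))
         = mconst (Poly_Mapping.lookup D (uv_exp n a0 (k - a0)) * of_nat (fact a0 * fact (k - a0)))"
proof -
  let ?c = "\<lambda>a. Poly_Mapping.lookup D (uv_exp n a (k - a))"
  have "diff_act D (uv_mono n a0 (k - a0))
      = (\<Sum>a\<le>k. mconst (?c a) * diff_act (uv_mono n a (k - a)) (uv_mono n a0 (k - a0)))"
    by (subst uv_form_eq[OF assms(1)]) (simp add: uv_form_def diff_act_lincomb)
  also have "\<dots> = (\<Sum>a\<le>k. if a = a0 then mconst (?c a) * mconst (of_nat (fact a0 * fact (k - a0))) else 0)"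
    by (rule sum.cong[OF refl]) (use assms(2) in \<open>auto simp: diff_act_uv_mono falling_fact_self\<close>)
  finally show ?thesis
    using assms(2) by (simp add: mconst_mult)
qed

lemma apolar_pairing_eq_0:
  fixes D :: "'a::field_char_0 mpoly"
  assumes D: "homog_in {n+1, n+2} k D"
    and kills: "\<And>a. a \<le> k \<Longrightarrow> diff_act D (uv_mono n a (k - a)) = 0"
  shows "D = 0"
proof -
  have "Poly_Mapping.lookup D (uv_exp n a (k - a)) = 0" if "a \<le> k" for a
    using kills[OF that] apolar_pairing[OF D that]
    by (simp add: mconst_eq_0_iff del: of_nat_mult)
  then show ?thesis
    by (subst uv_form_eq[OF D]) (simp add: uv_form_def)
qed

lemma apolar_pairing_uv_comb_eq_0:
  fixes D :: "'a::field_char_0 mpoly"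
  assumes D: "homog_in {n+1, n+2} k D" and "a \<le> k"
    and "Poly_Mapping.lookup D (uv_exp n a (k - a)) \<noteq> 0"
    and "diff_act D (mconst c * uv_mono n a (k - a)) = 0"
  shows "c = 0"
  using assms apolar_pairing[OF D \<open>a \<le> k\<close>]
  by (simp add: diff_act_scale_right mconst_mult[symmetric] mconst_eq_0_iff del: of_nat_mult)

text \<open>Given \<open>r \<le> k\<close> forms \<open>t l\<close> of degree \<open>k\<close>, the \<open>k + 1\<close> vectors
  \<open>(U\<^sup>a V\<^sup>k\<^sup>-\<^sup>a \<circ> t l)\<^sub>l\<^sub><\<^sub>r\<close> of \<open>K\<^sup>r\<close> are linearly dependent (encoded as linear forms
  \<open>\<Sum>\<^sub>l x\<^sub>l (U\<^sup>a V\<^sup>k\<^sup>-\<^sup>a \<circ> t l)\<close>); a dependency is a common annihilator.\<close>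

lemma annihilator_exists:
  fixes t :: "nat \<Rightarrow> 'a::field mpoly"
  assumes T: "\<And>l. l < r \<Longrightarrow> homog_in {n+1, n+2} k (t l)" and "r \<le> k"
  obtains E where "homog_in {n+1, n+2} k E" "E \<noteq> 0" "\<forall>l<r. diff_act E (t l) = 0"
proof -
  define v where "v a = (\<Sum>l<r. mvar l * diff_act (uv_mono n a (k - a)) (t l))" for a
  have "v a \<in> lin.span ((mvar :: nat \<Rightarrow> 'a mpoly) ` {..<r})" if "a < k + 1" for a
    unfolding v_def
  proof (rule sum_mvar_mult_in_span)
    fix l assume "l < r"
    moreover have "homog_in {n+1, n+2} k (uv_mono n a (k - a))"
      using that by (intro homog_uv_mono) simp
    ultimately show "diff_act (uv_mono n a (k - a)) (t l)
        = mconst (Poly_Mapping.lookup (diff_act (uv_mono n a (k - a)) (t l)) 0)"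
      using T by (blast intro: diff_act_homog_eq_mconst)
  qed
  moreover have "card ((mvar :: nat \<Rightarrow> 'a mpoly) ` {..<r}) < k + 1"
    using card_image_le[of "{..<r}" "mvar :: nat \<Rightarrow> 'a mpoly"] \<open>r \<le> k\<close> by simp
  ultimately obtain c where c0: "(\<Sum>a<k+1. mconst (c a) * v a) = 0" and "\<exists>a<k+1. c a \<noteq> 0"
    using not_lin_indep_fam[of "mvar ` {..<r}" "k + 1" v] by blast
  define E where "E = uv_form n k c"
  have E: "homog_in {n+1, n+2} k E"
    unfolding E_def by (rule homog_uv_form)
  have "E \<noteq> 0"
    using \<open>\<exists>a<k+1. c a \<noteq> 0\<close> uv_form_eq_0D[of n k c] unfolding E_def by auto
  define \<kappa> where "\<kappa> l = Poly_Mapping.lookup (diff_act E (t l)) 0" for l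
  have E_t: "diff_act E (t l) = mconst (\<kappa> l)" if "l < r" for l
    unfolding \<kappa>_def using diff_act_homog_eq_mconst[OF T[OF that] E] .
  have "(\<Sum>a<k+1. mconst (c a) * v a)
      = (\<Sum>l<r. \<Sum>a<k+1. mvar l * (mconst (c a) * diff_act (uv_mono n a (k - a)) (t l)))"
    unfolding v_def sum_distrib_left by (subst sum.swap) (simp only: mult.left_commute)
  also have "\<dots> = (\<Sum>l<r. mvar l * diff_act E (t l))"
    unfolding E_def uv_form_def diff_act_lincomb
    by (simp only: sum_distrib_left Suc_eq_plus1[symmetric] lessThan_Suc_atMost)
  also have "\<dots> = (\<Sum>l<r. mvar l * mconst (\<kappa> l))"
    using E_t by simp
  finally have "(\<Sum>l<r. mvar l * mconst (\<kappa> l)) = 0"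
    using c0 by simp
  then have "\<forall>l<r. diff_act E (t l) = 0"
    using lookup_sum_mvar_mult_mconst[of _ r \<kappa>] E_t by fastforce
  then show ?thesis
    using that E \<open>E \<noteq> 0\<close> by blast
qed

lemma annihilator_of_span:
  fixes B :: "'a::field mpoly set"
  assumes "finite B" and B: "\<And>b. b \<in> B \<Longrightarrow> homog_in {n+1, n+2} k b"
    and m: "homog_in {n+1, n+2} k m" "m \<notin> lin.span B"
  obtains E where "homog_in {n+1, n+2} k E" "E \<noteq> 0" "\<forall>b\<in>B. diff_act E b = 0"
proof -
  obtain T where T: "T \<subseteq> B" "lin.independent T" "B \<subseteq> lin.span T"
    by (metis lin.basis_exists)
  have "finite T"
    using finite_subset[OF T(1) \<open>finite B\<close>] .
  have "m \<notin> lin.span T"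
    using lin.span_mono[OF T(1)] m(2) by blast
  then have "card (insert m T) \<le> card (uv_monos n k :: 'a mpoly set)"
    using lin.independent_span_bound[OF finite_uv_monos lin.independent_insertI[OF _ T(2)]]
      m(1) T(1) B homog_uv_in_span[of n k] by blast
  then have "card T \<le> k"
    using card_uv_monos[of n k, where 'a='a] \<open>m \<notin> lin.span T\<close> lin.span_base[of m T] \<open>finite T\<close>
    by (metis card_insert_disjoint add_le_cancel_right order_trans Suc_eq_plus1)
  obtain t where t: "bij_betw t {..<card T} T"
    using ex_bij_betw_nat_finite[OF \<open>finite T\<close>] by (auto simp: atLeast0LessThan)
  then have tT: "l < card T \<Longrightarrow> t l \<in> T" for l
    by (auto simp: bij_betw_def)
  obtain E where E: "homog_in {n+1, n+2} k E" "E \<noteq> 0" "\<forall>l<card T. diff_act E (t l) = 0"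
    using annihilator_exists[of "card T" n k t] tT T(1) B \<open>card T \<le> k\<close> by blast
  have "diff_act E x = 0" if "x \<in> T" for x
    using bij_betw_imp_surj_on[OF t] that E(3) by (metis imageE lessThan_iff)
  then have "diff_act E b = 0" if "b \<in> B" for b
    using diff_act_in_span[of T E b] T(3) that by blast
  then show ?thesis
    using that E by blast
qed

lemma homog_uv_in_span_if_lin_indep:
  fixes w :: "nat \<Rightarrow> 'a::field mpoly"
  assumes w: "lin_indep_fam w (k + 1)" "\<And>j. j < k + 1 \<Longrightarrow> homog_in {n+1, n+2} k (w j)"
    and q: "homog_in {n+1, n+2} k q"
  shows "q \<in> lin.span (w ` {..<k+1})"
proof (rule ccontr)
  assume q_notin: "q \<notin> lin.span (w ` {..<k+1})"
  have indep: "lin.independent (insert q (w ` {..<k+1}))"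
    by (rule lin.independent_insertI[OF q_notin lin_indep_fam_independent[OF w(1)]])
  have "insert q (w ` {..<k+1}) \<subseteq> lin.span (uv_monos n k)"
    using homog_uv_in_span[OF q] homog_uv_in_span[OF w(2)] by blast
  then have "card (insert q (w ` {..<k+1})) \<le> card (uv_monos n k :: 'a mpoly set)"
    by (rule conjunct2[OF lin.independent_span_bound[OF finite_uv_monos indep]])
  moreover have "card (insert q (w ` {..<k+1})) = k + 2"
  proof -
    have "q \<notin> w ` {..<k+1}"
      using q_notin lin.span_base[of q "w ` {..<k+1}"] by (rule contrapos_nn)
    then show ?thesis
      using card_image[OF lin_indep_fam_inj[OF w(1)]] by (simp add: card_insert_disjoint)
  qed
  ultimately show False
    using card_uv_monos[of n k, where 'a='a] by simp
qed

lemma annihilator_of_basis_eq_0: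
  fixes w :: "nat \<Rightarrow> 'a::field_char_0 mpoly"
  assumes w: "lin_indep_fam w (k + 1)" "\<And>j. j < k + 1 \<Longrightarrow> homog_in {n+1, n+2} k (w j)"
    and D: "homog_in {n+1, n+2} k D" "\<And>j. j < k + 1 \<Longrightarrow> diff_act D (w j) = 0"
  shows "D = 0"
proof (rule apolar_pairing_eq_0[OF D(1)])
  fix a assume "a \<le> k"
  then have "homog_in {n+1, n+2} k (uv_mono n a (k - a))"
    by (intro homog_uv_mono) simp
  then have "uv_mono n a (k - a) \<in> lin.span (w ` {..<k+1})"
    using homog_uv_in_span_if_lin_indep[OF w] by blast
  then show "diff_act D (uv_mono n a (k - a)) = 0"
    by (rule diff_act_in_span[rotated]) (use D(2) in auto)
qed

text \<open>The annihilator of \<open>k\<close> independent forms of degree \<open>k\<close> is a line, so two of its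
  elements cannot differ in which coefficients vanish.\<close>

lemma annihilator_of_hyperplane_eq_0:
  fixes w :: "nat \<Rightarrow> 'a::field_char_0 mpoly"
  assumes w: "lin_indep_fam w k" "\<And>j. j < k \<Longrightarrow> homog_in {n+1, n+2} k (w j)"
    and D1: "homog_in {n+1, n+2} k D1" "\<And>j. j < k \<Longrightarrow> diff_act D1 (w j) = 0"
    and D2: "homog_in {n+1, n+2} k D2" "\<And>j. j < k \<Longrightarrow> diff_act D2 (w j) = 0"
    and a1: "a1 \<le> k" "Poly_Mapping.lookup D1 (uv_exp n a1 (k - a1)) \<noteq> 0"
      "Poly_Mapping.lookup D2 (uv_exp n a1 (k - a1)) = 0"
  shows "D2 = 0"
proof (rule ccontr)
  assume "D2 \<noteq> 0"
  then obtain a2 where a2: "a2 \<le> k" "Poly_Mapping.lookup D2 (uv_exp n a2 (k - a2)) \<noteq> 0"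
    using exists_uv_coeff_nonzero[OF D2(1)] by blast
  define v :: "nat \<Rightarrow> 'a mpoly" where "v j = (if j = 0 then uv_mono n a1 (k - a1) else uv_mono n a2 (k - a2))" for j :: nat
  define w' where "w' j = (if j < k then w j else v (j - k))" for j
  have "lin_indep_fam w' (k + 2)"
    unfolding w'_def
  proof (rule lin_indep_fam_join)
    fix c c' assume s: "(\<Sum>j<k. mconst (c j) * w j) + (\<Sum>j<2. mconst (c' j) * v j) = 0"
    let ?W = "\<Sum>j<k. mconst (c j) * w j"
    have s': "?W + mconst (c' 0) * uv_mono n a1 (k - a1) + mconst (c' 1) * uv_mono n a2 (k - a2) = 0"
      using s by (simp add: numeral_2_eq_2 v_def add.assoc)
    have kills: "diff_act D ?W = 0" if "\<And>j. j < k \<Longrightarrow> diff_act D (w j) = 0" for D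
      using that by (simp add: diff_act_sum_right diff_act_scale_right)
    have "diff_act D2 (mconst (c' 1) * uv_mono n a2 (k - a2)) = 0"
      using arg_cong[OF s', of "diff_act D2"] kills[OF D2(2)] apolar_pairing[OF D2(1) a1(1)] a1(3)
      by (simp add: diff_act_add_right diff_act_scale_right)
    then have c'1: "c' 1 = 0"
      by (rule apolar_pairing_uv_comb_eq_0[OF D2(1) a2, rotated])
    have "diff_act D1 (mconst (c' 0) * uv_mono n a1 (k - a1)) = 0"
      using arg_cong[OF s', of "diff_act D1"] kills[OF D1(2)] c'1
      by (simp add: diff_act_add_right diff_act_scale_right)
    then have c'0: "c' 0 = 0"
      by (rule apolar_pairing_uv_comb_eq_0[OF D1(1) a1(1,2), rotated])
    then have "\<forall>j<k. c j = 0"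
      using s' c'1 w(1) unfolding lin_indep_fam_def by simp
    then show "(\<forall>j<k. c j = 0) \<and> (\<forall>j<2. c' j = 0)"
      using c'0 c'1 by (auto simp: numeral_2_eq_2 less_Suc_eq)
  qed
  moreover have "homog_in {n+1, n+2} k (w' j)" if "j < k + 2" for j
    using w(2) homog_uv_mono[of k a1 "k - a1" n] homog_uv_mono[of k a2 "k - a2" n] a1(1) a2(1)
    unfolding w'_def v_def by auto
  ultimately have "k + 2 \<le> k + 1"
    by (rule lin_indep_fam_homog_uv_le)
  then show False
    by simp
qed

lemma uv_exp_eq_iff: "uv_exp n a b = uv_exp n a' b' \<longleftrightarrow> a = a' \<and> b = b'"
proof
  assume "uv_exp n a b = uv_exp n a' b'"
  then have "Poly_Mapping.lookup (uv_exp n a b) j = Poly_Mapping.lookup (uv_exp n a' b') j" for j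
    by simp
  from this[of "n+1"] this[of "n+2"] show "a = a' \<and> b = b'"
    by (simp add: lookup_uv_exp)
qed simp

lemma lookup_uv_mono_comb:
  fixes \<sigma> :: "nat \<Rightarrow> nat"
  assumes "inj_on \<sigma> {..<r}" "j0 < r"
  shows "Poly_Mapping.lookup (\<Sum>j<r. mconst (c j) * uv_mono n (\<sigma> j) (k - \<sigma> j)) (uv_exp n (\<sigma> j0) (k - \<sigma> j0)) = c j0"
proof -
  have "Poly_Mapping.lookup (\<Sum>j<r. mconst (c j) * uv_mono n (\<sigma> j) (k - \<sigma> j)) (uv_exp n (\<sigma> j0) (k - \<sigma> j0))
      = (\<Sum>j<r. if j = j0 then c j else 0)"
    unfolding lookup_sum uv_mono_def mconst_mult_single
    by (rule sum.cong[OF refl]) (use assms in \<open>auto simp: lookup_single when_def uv_exp_eq_iff dest: inj_onD\<close>)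
  then show ?thesis
    using assms(2) by simp
qed

lemma lookup_uv_mono_comb_eq_0:
  fixes \<sigma> :: "nat \<Rightarrow> nat"
  assumes "\<forall>j<r. \<sigma> j \<noteq> a"
  shows "Poly_Mapping.lookup (\<Sum>j<r. mconst (c j) * uv_mono n (\<sigma> j) (k - \<sigma> j)) (uv_exp n a (k - a)) = 0"
  unfolding lookup_sum uv_mono_def mconst_mult_single
  by (rule sum.neutral) (use assms in \<open>auto simp: lookup_single when_def uv_exp_eq_iff\<close>)

lemma diff_act_linear_form_uv:
  assumes l: "homog_in {..n+2} 1 l" and q: "homog_in {n+1, n+2} k q"
  shows "diff_act l q = diff_act (mconst (Poly_Mapping.lookup l (Poly_Mapping.single (n+1) 1)) * mvar (n+1)
                               + mconst (Poly_Mapping.lookup l (Poly_Mapping.single (n+2) 1)) * mvar (n+2)) q"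
proof -
  let ?c = "\<lambda>t. Poly_Mapping.lookup l (Poly_Mapping.single t 1)"
  have "diff_act l q = (\<Sum>t\<le>n+2. mconst (?c t) * diff_act (mvar t) q)"
    by (subst linear_form_eq_sum[OF l]) (rule diff_act_lincomb)
  also have "\<dots> = (\<Sum>t\<le>n. mconst (?c t) * diff_act (mvar t) q) + mconst (?c (n+1)) * diff_act (mvar (n+1)) q
                    + mconst (?c (n+2)) * diff_act (mvar (n+2)) q"
    by (simp add: numeral_2_eq_2)
  also have "(\<Sum>t\<le>n. mconst (?c t) * diff_act (mvar t) q) = 0"
    by (intro sum.neutral ballI) (auto simp: diff_mvar_var_free[OF homog_var_free[OF q]])
  finally show ?thesis
    by (simp add: diff_act_add_left diff_act_scale_left)
qed

lemma exists_uv_form_killed_by_linear: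
  fixes L :: "'a::field mpoly"
  assumes L: "homog_in {n+1, n+2} 1 L" and "k \<ge> 1"
  obtains q where "homog_in {n+1, n+2} k q" "q \<noteq> 0" "diff_act L q = 0"
proof -
  have "homog_in {n+1, n+2} (k - 1) (diff_act L (uv_mono n a (k - a)))" if "a < k + 1" for a
    using that by (intro homog_diff_act(1)[OF homog_uv_mono L]) simp
  moreover have "k - 1 + 1 < k + 1"
    using \<open>k \<ge> 1\<close> by simp
  ultimately obtain c where c: "(\<Sum>a<k+1. mconst (c a) * diff_act L (uv_mono n a (k - a))) = 0" "\<exists>a<k+1. c a \<noteq> 0"
    by (rule exists_uv_comb_eq_0)
  show ?thesis
  proof (rule that[of "uv_form n k c"])
    show "homog_in {n+1, n+2} k (uv_form n k c)"
      by (rule homog_uv_form)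
    show "uv_form n k c \<noteq> 0"
      using c(2) uv_form_eq_0D[of n k c] by auto
    have "diff_act L (uv_form n k c) = (\<Sum>a\<le>k. mconst (c a) * diff_act L (uv_mono n a (k - a)))"
      unfolding uv_form_def by (simp add: diff_act_sum_right diff_act_scale_right)
    also have "\<dots> = (\<Sum>a<k+1. mconst (c a) * diff_act L (uv_mono n a (k - a)))"
      by (simp only: Suc_eq_plus1[symmetric] lessThan_Suc_atMost)
    finally show "diff_act L (uv_form n k c) = 0"
      using c(1) by simp
  qed
qed

section \<open>The Hilbert function of \<open>A\<^sub>f\<close>\<close>

lemma Rdeg_lincomb: "(\<And>j. j \<in> I \<Longrightarrow> \<theta> j \<in> Rdeg n i) \<Longrightarrow> (\<Sum>j\<in>I. mconst (c j) * \<theta> j) \<in> Rdeg n i"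
  unfolding Rdeg_def by (auto intro!: homog_sum homog_scale)

lemma Rdeg_diff: "a \<in> Rdeg n i \<Longrightarrow> b \<in> Rdeg n i \<Longrightarrow> a - b \<in> Rdeg n i"
  unfolding Rdeg_def by (auto intro: homog_diff)

lemma Rdeg_mult: "a \<in> Rdeg n i \<Longrightarrow> b \<in> Rdeg n j \<Longrightarrow> a * b \<in> Rdeg n (i + j)"
  unfolding Rdeg_def by (auto intro: homog_mult)

lemma mvar_Rdeg: "j \<le> n + 2 \<Longrightarrow> mvar j \<in> Rdeg n 1"
  unfolding Rdeg_def using homog_mvar_iff[of "{..n+2}" j] by simp

lemma uv_mono_Rdeg: "k = a + b \<Longrightarrow> uv_mono n a b \<in> Rdeg n k"
  unfolding Rdeg_def by (auto intro: homog_subset[OF _ homog_uv_mono])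

lemma Rdeg_Ann_iff: "a \<in> Rdeg n i \<Longrightarrow> a \<in> Ann n f \<longleftrightarrow> diff_act a f = 0"
  unfolding Ann_def Rdeg_def homog_in_def by auto

text \<open>Through \<open>\<theta> \<mapsto> \<theta> \<circ> f\<close>, \<open>[A\<^sub>f]\<^sub>i\<close> is isomorphic to \<open>{\<theta> \<circ> f | \<theta> \<in> [R]\<^sub>i}\<close>;
  an \<open>hbasis\<close> is a family in \<open>[R]\<^sub>i\<close> mapped onto a basis of that space.\<close>

definition hbasis :: "nat \<Rightarrow> 'a::field mpoly \<Rightarrow> nat \<Rightarrow> nat \<Rightarrow> (nat \<Rightarrow> 'a mpoly) \<Rightarrow> bool" where
  "hbasis n f i m \<theta> \<longleftrightarrow> (\<forall>j<m. \<theta> j \<in> Rdeg n i) \<and> lin_indep_fam (\<lambda>j. diff_act (\<theta> j) f) m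
     \<and> (\<forall>\<psi>\<in>Rdeg n i. diff_act \<psi> f \<in> lin.span ((\<lambda>j. diff_act (\<theta> j) f) ` {..<m}))"

lemma hvec_witness_iff_hbasis:
  fixes f :: "'a::field mpoly"
  shows "(\<forall>j<m. \<theta> j \<in> Rdeg n i) \<and>
      (\<forall>c. (\<Sum>j<m. mconst (c j) * \<theta> j) \<in> Ann n f \<longrightarrow> (\<forall>j<m. c j = 0)) \<and>
      (\<forall>\<psi>\<in>Rdeg n i. \<exists>c. \<psi> - (\<Sum>j<m. mconst (c j) * \<theta> j) \<in> Ann n f)
    \<longleftrightarrow> hbasis n f i m \<theta>"
proof (cases "\<forall>j<m. \<theta> j \<in> Rdeg n i")
  case True
  then have comb: "(\<Sum>j<m. mconst (c j) * \<theta> j) \<in> Ann n f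
      \<longleftrightarrow> (\<Sum>j<m. mconst (c j) * diff_act (\<theta> j) f) = 0" for c
    using Rdeg_Ann_iff[OF Rdeg_lincomb, of "{..<m}" \<theta> n i c f] True by (simp add: diff_act_lincomb)
  have "\<psi> - (\<Sum>j<m. mconst (c j) * \<theta> j) \<in> Ann n f
      \<longleftrightarrow> diff_act \<psi> f = (\<Sum>j<m. mconst (c j) * diff_act (\<theta> j) f)" if "\<psi> \<in> Rdeg n i" for \<psi> c
    using Rdeg_Ann_iff[OF Rdeg_diff[OF that Rdeg_lincomb], of "{..<m}" \<theta> c f] True
    by (simp add: diff_act_diff_left diff_act_lincomb)
  then show ?thesis
    using True unfolding hbasis_def lin_indep_fam_def span_fam_iff comb by auto
qed (auto simp: hbasis_def)

lemma hbasis_length_unique: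
  assumes "hbasis n f i m \<theta>" "hbasis n f i m' \<theta>'"
  shows "m' = m"
proof -
  have "m' \<le> m" if "hbasis n f i m \<theta>" "hbasis n f i m' \<theta>'" for m m' \<theta> \<theta>'
  proof -
    have "m' \<le> card ((\<lambda>j. diff_act (\<theta> j) f) ` {..<m})"
      using that by (intro lin_indep_fam_card_le) (auto simp: hbasis_def)
    also have "\<dots> \<le> m"
      using card_image_le[of "{..<m}"] by simp
    finally show ?thesis .
  qed
  from this[OF assms] this[OF assms(2,1)] show ?thesis
    by simp
qed

lemma hvec_eq_if_hbasis: "hbasis n f i m \<theta> \<Longrightarrow> hvec n f i = m"
  unfolding hvec_def hvec_witness_iff_hbasis
  by (rule the_equality) (use hbasis_length_unique in blast)+

lemma not_mult_surj_if_kernel: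
  assumes hb: "hbasis n f i h \<theta>" "hbasis n f (Suc i) h \<theta>'" and l: "l \<in> Rdeg n 1"
    and \<theta>0: "\<theta>0 \<in> Rdeg n i" "diff_act \<theta>0 f \<noteq> 0" "diff_act (l * \<theta>0) f = 0"
  shows "\<not> (\<forall>\<psi>\<in>Rdeg n (Suc i). \<exists>\<theta>\<in>Rdeg n i. \<psi> - l * \<theta> \<in> Ann n f)"
proof
  assume surj: "\<forall>\<psi>\<in>Rdeg n (Suc i). \<exists>\<theta>\<in>Rdeg n i. \<psi> - l * \<theta> \<in> Ann n f"
  have "\<exists>\<theta>. \<theta> \<in> Rdeg n i \<and> diff_act (\<theta>' j) f = diff_act (l * \<theta>) f" if "j < h" for j
  proof -
    have \<theta>'j: "\<theta>' j \<in> Rdeg n (Suc i)"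
      using hb(2) that unfolding hbasis_def by auto
    then obtain \<theta> where \<theta>: "\<theta> \<in> Rdeg n i" "\<theta>' j - l * \<theta> \<in> Ann n f"
      using surj by blast
    moreover have "\<theta>' j - l * \<theta> \<in> Rdeg n (Suc i)"
      using Rdeg_diff[OF \<theta>'j] Rdeg_mult[OF l \<theta>(1)] by simp
    ultimately show ?thesis
      by (auto simp: Rdeg_Ann_iff diff_act_diff_left)
  qed
  then obtain \<eta> where \<eta>: "\<And>j. j < h \<Longrightarrow> \<eta> j \<in> Rdeg n i \<and> diff_act (\<theta>' j) f = diff_act (l * \<eta> j) f"
    by metis
  define w where "w j = (if j < 1 then diff_act \<theta>0 f else diff_act (\<eta> (j - 1)) f)" for j
  have "lin_indep_fam w (1 + h)"
    unfolding w_def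
  proof (rule lin_indep_fam_join)
    fix c c' :: "nat \<Rightarrow> 'a"
    assume s: "(\<Sum>j<1. mconst (c j) * diff_act \<theta>0 f) + (\<Sum>j<h. mconst (c' j) * diff_act (\<eta> j) f) = 0"
    then have "diff_act l ((\<Sum>j<1. mconst (c j) * diff_act \<theta>0 f) + (\<Sum>j<h. mconst (c' j) * diff_act (\<eta> j) f)) = 0"
      by simp
    then have "(\<Sum>j<h. mconst (c' j) * diff_act (\<theta>' j) f) = 0"
      using \<eta> \<theta>0(3)
      by (simp add: diff_act_add_right diff_act_sum_right diff_act_scale_right diff_act_mult[symmetric])
    then have c': "\<forall>j<h. c' j = 0"
      using hb(2) unfolding hbasis_def lin_indep_fam_def by blast
    then have "mconst (c 0) * diff_act \<theta>0 f = 0"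
      using s by simp
    then have "c 0 = 0"
      using \<theta>0(2) by (simp add: mconst_eq_0_iff)
    then show "(\<forall>j<1. c j = 0) \<and> (\<forall>j<h. c' j = 0)"
      using c' by auto
  qed
  then have "1 + h \<le> card ((\<lambda>j. diff_act (\<theta> j) f) ` {..<h})"
    by (rule lin_indep_fam_card_le) (use hb(1) \<theta>0(1) \<eta> in \<open>auto simp: hbasis_def w_def\<close>)
  also have "\<dots> \<le> h"
    using card_image_le[of "{..<h}"] by simp
  finally show False
    by simp
qed

lemma hbasis_join:
  fixes f :: "'a::field mpoly"
  assumes "\<forall>j<m1. \<theta>1 j \<in> Rdeg n i" "\<forall>j<m2. \<theta>2 j \<in> Rdeg n i"
    and "\<And>c c'. (\<Sum>j<m1. mconst (c j) * diff_act (\<theta>1 j) f) + (\<Sum>j<m2. mconst (c' j) * diff_act (\<theta>2 j) f) = 0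
                  \<Longrightarrow> (\<forall>j<m1. c j = 0) \<and> (\<forall>j<m2. c' j = 0)"
    and "\<And>\<psi>. \<psi> \<in> Rdeg n i \<Longrightarrow> diff_act \<psi> f
           \<in> lin.span ((\<lambda>j. diff_act (\<theta>1 j) f) ` {..<m1} \<union> (\<lambda>j. diff_act (\<theta>2 j) f) ` {..<m2})"
  shows "hbasis n f i (m1 + m2) (\<lambda>j. if j < m1 then \<theta>1 j else \<theta>2 (j - m1))"
proof -
  have img: "(\<lambda>j. diff_act (if j < m1 then \<theta>1 j else \<theta>2 (j - m1)) f)
      = (\<lambda>j. if j < m1 then diff_act (\<theta>1 j) f else diff_act (\<theta>2 (j - m1)) f)"
    by auto
  have "lin_indep_fam (\<lambda>j. if j < m1 then diff_act (\<theta>1 j) f else diff_act (\<theta>2 (j - m1)) f) (m1 + m2)"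
    by (rule lin_indep_fam_join) (rule assms(3))
  moreover note join_image[of m1 "\<lambda>j. diff_act (\<theta>1 j) f" "\<lambda>j. diff_act (\<theta>2 j) f" m2]
  ultimately show ?thesis
    unfolding hbasis_def img using assms(1,2,4) by auto
qed

section \<open>Perazzo forms of degree \<open>n + 1\<close> and \<open>n + 2\<close>\<close>

locale perazzo =
  fixes n d :: nat and p :: "nat \<Rightarrow> 'a::field_char_0 mpoly" and g f :: "'a mpoly"
  assumes n_gt_2: "n > 2"
    and d_cases: "d = n + 1 \<or> d = n + 2"
    and homog_p: "\<And>i. i \<le> n \<Longrightarrow> homog_in {n+1, n+2} (d - 1) (p i)"
    and lin_indep_p: "\<And>c. (\<Sum>i\<le>n. mconst (c i) * p i) = 0 \<Longrightarrow> \<forall>i\<le>n. c i = 0"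
    and homog_g: "homog_in {n+1, n+2} d g"
    and f_eq: "f = (\<Sum>i\<le>n. mvar i * p i) + g"
begin

abbreviation phi :: "'a mpoly \<Rightarrow> 'a mpoly" where
  "phi \<theta> \<equiv> diff_act \<theta> f"

definition kills_p :: "'a mpoly \<Rightarrow> bool" where
  "kills_p D \<longleftrightarrow> (\<forall>j\<le>n. diff_act D (p j) = 0)"

lemma d_ge_4: "d \<ge> 4"
  using n_gt_2 d_cases by auto

lemma p_var_free: "j \<le> n \<Longrightarrow> i \<le> n \<Longrightarrow> var_free j (p i)"
  using homog_var_free[OF homog_p] by auto

lemma lin_indep_fam_p: "lin_indep_fam p (n + 1)"
  unfolding lin_indep_fam_def using lin_indep_p by (simp add: lessThan_Suc_atMost)

lemma diff_mvar_f: "j \<le> n \<Longrightarrow> diff_act (mvar j) f = p j"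
proof -
  assume j: "j \<le> n"
  have "diff_act (mvar j) (mvar i * p i) = (if i = j then p i else 0)" if "i \<le> n" for i
    using diff_mvar_mvar_mult[OF p_var_free[OF j that]]
      diff_mvar_var_free[OF var_free_mvar_mult[OF _ p_var_free[OF j that]]] by auto
  then have "diff_act (mvar j) (\<Sum>i\<le>n. mvar i * p i) = p j"
    using j by (simp add: diff_act_sum_right)
  moreover have "diff_act (mvar j) g = 0"
    using homog_var_free[OF homog_g] j by (auto intro: diff_mvar_var_free)
  ultimately show ?thesis
    unfolding f_eq diff_act_add_right by simp
qed

lemma diff_mvar_mult_f: "j \<le> n \<Longrightarrow> diff_act (mvar j * D) f = diff_act D (p j)"
  by (simp add: mult.commute[of "mvar j"] diff_act_mult diff_mvar_f)

lemma diff_mvar_phi: "j \<le> n \<Longrightarrow> diff_act (mvar j) (phi D) = diff_act D (p j)"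
  using diff_mvar_mult_f[of j D] by (simp add: diff_act_mult)

lemma phi_uv_eq:
  assumes "homog_in {n+1, n+2} s D"
  shows "phi D = (\<Sum>i\<le>n. mvar i * diff_act D (p i)) + diff_act D g"
proof -
  have "diff_act D (mvar i * p i) = mvar i * diff_act D (p i)" if "i \<le> n" for i
    using homog_var_free[OF assms, of i] that by (intro diff_act_mvar_mult) auto
  then show ?thesis
    unfolding f_eq diff_act_add_right by (simp add: diff_act_sum_right)
qed

lemma homog_f: "homog_in {..n+2} d f"
proof -
  have "homog_in {..n+2} (1 + (d - 1)) (mvar i * p i)" if "i \<le> n" for i
    using that homog_mvar_iff[of "{..n+2}" i] homog_subset[OF _ homog_p[OF that], of "{..n+2}"]
    by (intro homog_mult) auto
  then show ?thesis
    unfolding f_eq using d_ge_4 by (auto intro!: homog_add homog_sum homog_subset[OF _ homog_g])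
qed

lemma f_nonzero: "f \<noteq> 0"
proof
  assume "f = 0"
  then have "p 0 = 0"
    using diff_mvar_f[of 0] by simp
  then have "(\<Sum>j\<le>n. mconst (if j = 0 then 1 else 0) * p j) = 0"
    by (intro sum.neutral) (auto simp: mconst_1)
  then show False
    using lin_indep_p[of "\<lambda>j. if j = 0 then 1 else 0"] by auto
qed

lemma kills_p_mult: "kills_p D \<Longrightarrow> kills_p (E * D)"
  unfolding kills_p_def by (simp add: diff_act_mult)

text \<open>Apply \<open>y\<^sub>j\<close>: it kills \<open>X\<close> and sends \<open>D \<circ> f\<close> to \<open>D \<circ> p\<^sub>j\<close>.\<close>

lemma kills_p_if_phi_eq:
  assumes "homog_in {n+1, n+2} s X" "X + phi D = 0"
  shows "kills_p D"
  unfolding kills_p_def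
proof (intro allI impI)
  fix j assume "j \<le> n"
  then have "diff_act (mvar j) X = 0"
    using homog_var_free[OF assms(1), of j] by (auto intro: diff_mvar_var_free)
  then show "diff_act D (p j) = 0"
    using arg_cong[OF assms(2), of "diff_act (mvar j)"] \<open>j \<le> n\<close>
    by (simp add: diff_act_add_right diff_mvar_phi)
qed

lemma kills_p_eq_0_top:
  assumes "d = n + 1" "homog_in {n+1, n+2} n D" "kills_p D"
  shows "D = 0"
  using annihilator_of_basis_eq_0[OF lin_indep_fam_p _ assms(2)] homog_p assms(1,3)
  unfolding kills_p_def by simp

lemma kills_p_eq_0_top_coeff:
  assumes "d = n + 2"
    and D1: "homog_in {n+1, n+2} (n+1) D1" "kills_p D1"
    and D2: "homog_in {n+1, n+2} (n+1) D2" "kills_p D2"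
    and "a \<le> n + 1" "Poly_Mapping.lookup D1 (uv_exp n a (n + 1 - a)) \<noteq> 0"
      "Poly_Mapping.lookup D2 (uv_exp n a (n + 1 - a)) = 0"
  shows "D2 = 0"
  by (rule annihilator_of_hyperplane_eq_0[OF lin_indep_fam_p _ D1(1) _ D2(1) _ assms(6-8)])
    (use homog_p assms(1) D1(2) D2(2) in \<open>auto simp: kills_p_def\<close>)

lemma exists_kills_p_top:
  assumes "d = n + 2"
  obtains D0 where "homog_in {n+1, n+2} (n+1) D0" "D0 \<noteq> 0" "kills_p D0"
proof -
  obtain E where "homog_in {n+1, n+2} (n+1) E" "E \<noteq> 0" "\<forall>l<n+1. diff_act E (p l) = 0"
    by (rule annihilator_exists[of "n + 1" n "n + 1" p]) (use homog_p assms in auto)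
  then show ?thesis
    using that unfolding kills_p_def by auto
qed

text \<open>For \<open>d = n + 1\<close> the \<open>p\<^sub>j\<close> span all binary forms of
  degree \<open>n\<close>; for \<open>d = n + 2\<close> they span a hyperplane, whose annihilator cannot contain both
  \<open>D U\<^sup>s\<close> and \<open>D V\<^sup>s\<close>.\<close>

lemma kills_p_shifts_eq_0:
  assumes D: "homog_in {n+1, n+2} i D" and i: "i + 2 \<le> d"
    and K1: "kills_p (D * uv_mono n (d - 1 - i) 0)" and K2: "kills_p (D * uv_mono n 0 (d - 1 - i))"
  shows "D = 0"
proof (cases "d = n + 1")
  case True
  have "homog_in {n+1, n+2} (i + (d - 1 - i)) (D * uv_mono n (d - 1 - i) 0)"
    by (rule homog_mult[OF D homog_uv_mono]) simp
  then have "D * uv_mono n (d - 1 - i) 0 = 0"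
    using kills_p_eq_0_top[OF True _ K1] True i by simp
  then show ?thesis
    using uv_mono_nonzero by (metis mult_eq_0_iff)
next
  case False
  then have d: "d = n + 2"
    using d_cases by simp
  define s where "s = d - 1 - i"
  have s: "1 \<le> s" "i + s = n + 1"
    using i d by (auto simp: s_def)
  show ?thesis
  proof (rule ccontr)
    assume "D \<noteq> 0"
    then obtain a where a: "a \<le> i + s"
      "Poly_Mapping.lookup (D * uv_mono n s 0) (uv_exp n a (i + s - a)) \<noteq> 0"
      "Poly_Mapping.lookup (D * uv_mono n 0 s) (uv_exp n a (i + s - a)) = 0"
      by (rule exists_coeff_shifts_differ[OF D _ s(1)])
    have "homog_in {n+1, n+2} (n+1) (D * uv_mono n s 0)" "homog_in {n+1, n+2} (n+1) (D * uv_mono n 0 s)"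
      using homog_mult[OF D homog_uv_mono[of s s 0 n]] homog_mult[OF D homog_uv_mono[of s 0 s n]] s by simp_all
    then have "D * uv_mono n 0 s = 0"
      using kills_p_eq_0_top_coeff[OF d _ _ _ _ a[unfolded s(2)]] K1 K2 unfolding s_def by blast
    then show False
      using \<open>D \<noteq> 0\<close> uv_mono_nonzero by (metis mult_eq_0_iff)
  qed
qed

lemma kills_p_eq_0:
  assumes "homog_in {n+1, n+2} i D" "i + 2 \<le> d" "kills_p D"
  shows "D = 0"
proof (rule kills_p_shifts_eq_0[OF assms(1,2)])
  show "kills_p (D * uv_mono n (d - 1 - i) 0)" "kills_p (D * uv_mono n 0 (d - 1 - i))"
    using kills_p_mult[OF assms(3), of "uv_mono n (d - 1 - i) 0"]
      kills_p_mult[OF assms(3), of "uv_mono n 0 (d - 1 - i)"] by (simp_all add: mult.commute)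
qed

lemma uv_form_eq_0_if_phi_eq:
  assumes "homog_in {n+1, n+2} s X" "X + phi (uv_form n i c) = 0"
    and "i + 2 \<le> d \<or> (d = n + 1 \<and> i = n)"
  shows "uv_form n i c = 0"
proof -
  have K: "kills_p (uv_form n i c)"
    by (rule kills_p_if_phi_eq[OF assms(1,2)])
  show ?thesis
  proof (cases "i + 2 \<le> d")
    case True
    then show ?thesis
      by (rule kills_p_eq_0[OF homog_uv_form _ K])
  next
    case False
    then have "d = n + 1" "i = n"
      using assms(3) by auto
    moreover have "homog_in {n+1, n+2} n (uv_form n i c)"
      using homog_uv_form[of n i c] \<open>i = n\<close> by simp
    ultimately show ?thesis
      using kills_p_eq_0_top[OF _ _ K] by simp
  qed
qed

end
context perazzo
begin

lemma phi_image_span: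
  assumes "B \<subseteq> phi ` Rdeg n i"
  shows "lin.span B \<subseteq> phi ` Rdeg n i"
proof
  fix y assume "y \<in> lin.span B"
  then show "y \<in> phi ` Rdeg n i"
  proof (induction rule: lin.span_induct_alt)
    case base
    have "0 \<in> Rdeg n i"
      by (simp add: Rdeg_def)
    then show ?case
      by force
  next
    case (step c x y)
    then obtain \<theta> \<theta>' where "\<theta> \<in> Rdeg n i" "\<theta>' \<in> Rdeg n i" "x = phi \<theta>" "y = phi \<theta>'"
      using assms by blast
    moreover have "mconst c * \<theta> + \<theta>' \<in> Rdeg n i"
      using calculation unfolding Rdeg_def by (auto intro: homog_add homog_scale)
    ultimately show ?case
      by (intro image_eqI[of _ _ "mconst c * \<theta> + \<theta>'"]) (auto simp: diff_act_add_left diff_act_scale_left)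
  qed
qed

lemma phi_single_cases:
  assumes e: "Poly_Mapping.keys e \<subseteq> {..n+2}" "mono_deg e = i"
  shows "(\<exists>a\<le>i. Poly_Mapping.single e x = mconst x * uv_mono n a (i - a))
       \<or> (\<exists>j\<le>n. \<exists>b. 1 \<le> i \<and> b \<le> i - 1 \<and> phi (Poly_Mapping.single e x) = mconst x * diff_act (uv_mono n b (i - 1 - b)) (p j))
       \<or> phi (Poly_Mapping.single e x) = 0"
proof (cases "\<forall>j\<le>n. Poly_Mapping.lookup e j = 0")
  case True
  obtain a where "a \<le> i" "Poly_Mapping.single e x = mconst x * uv_mono n a (i - a)"
    by (rule single_eq_mconst_mult_uv_mono[OF e(1) True e(2)])
  then show ?thesis
    by blast
next
  case False
  then obtain j where j: "j \<le> n" "Poly_Mapping.lookup e j \<noteq> 0"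
    by blast
  obtain e1 where e1: "Poly_Mapping.single e x = mvar j * Poly_Mapping.single e1 x"
    "Poly_Mapping.keys e1 \<subseteq> {..n+2}" "mono_deg e1 = i - 1" "1 \<le> i"
    by (rule single_eq_mvar_mult[OF e j(2)])
  have phi_e: "phi (Poly_Mapping.single e x) = diff_act (Poly_Mapping.single e1 x) (p j)"
    unfolding e1(1) by (rule diff_mvar_mult_f[OF j(1)])
  show ?thesis
  proof (cases "\<forall>k\<le>n. Poly_Mapping.lookup e1 k = 0")
    case True
    obtain b where b: "b \<le> i - 1" "Poly_Mapping.single e1 x = mconst x * uv_mono n b (i - 1 - b)"
      by (rule single_eq_mconst_mult_uv_mono[OF e1(2) True e1(3)])
    then have "phi (Poly_Mapping.single e x) = mconst x * diff_act (uv_mono n b (i - 1 - b)) (p j)"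
      unfolding phi_e by (simp add: diff_act_scale_left)
    then show ?thesis
      using b(1) j(1) e1(4) by blast
  next
    case False
    then obtain k where k: "k \<le> n" "Poly_Mapping.lookup e1 k \<noteq> 0"
      by blast
    obtain e2 where "Poly_Mapping.single e1 x = mvar k * Poly_Mapping.single e2 x"
      by (rule single_eq_mvar_mult[OF e1(2,3) k(2)])
    then have "phi (Poly_Mapping.single e x) = diff_act (Poly_Mapping.single e2 x) (diff_act (mvar k) (p j))"
      unfolding phi_e by (simp add: mult.commute[of "mvar k"] diff_act_mult)
    also have "\<dots> = 0"
      using diff_mvar_var_free[OF p_var_free[OF k(1) j(1)]] by simp
    finally show ?thesis
      by blast
  qed
qed

lemma phi_in_span:
  assumes uv: "\<And>a. a \<le> i \<Longrightarrow> phi (uv_mono n a (i - a)) \<in> lin.span B"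
    and p: "\<And>j b. j \<le> n \<Longrightarrow> 1 \<le> i \<Longrightarrow> b \<le> i - 1 \<Longrightarrow> diff_act (uv_mono n b (i - 1 - b)) (p j) \<in> lin.span B"
    and \<psi>: "\<psi> \<in> Rdeg n i"
  shows "phi \<psi> \<in> lin.span B"
proof -
  have "phi \<psi> = (\<Sum>e\<in>Poly_Mapping.keys \<psi>. phi (Poly_Mapping.single e (Poly_Mapping.lookup \<psi> e)))"
    by (subst poly_mapping_sum_single[of \<psi>]) (simp add: diff_act_sum_left)
  also have "\<dots> \<in> lin.span B"
  proof (rule lin.span_sum)
    fix e assume "e \<in> Poly_Mapping.keys \<psi>"
    then have "Poly_Mapping.keys e \<subseteq> {..n+2}" "mono_deg e = i"
      using \<psi> unfolding Rdeg_def homog_in_def by auto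
    from phi_single_cases[OF this, of "Poly_Mapping.lookup \<psi> e"]
    show "phi (Poly_Mapping.single e (Poly_Mapping.lookup \<psi> e)) \<in> lin.span B"
    proof (elim disjE exE conjE)
      fix a assume "a \<le> i" "Poly_Mapping.single e (Poly_Mapping.lookup \<psi> e) = mconst (Poly_Mapping.lookup \<psi> e) * uv_mono n a (i - a)"
      then show ?thesis
        using uv by (simp add: diff_act_scale_left lin.span_scale)
    next
      fix j b assume "j \<le> n" "1 \<le> i" "b \<le> i - 1"
        "phi (Poly_Mapping.single e (Poly_Mapping.lookup \<psi> e)) = mconst (Poly_Mapping.lookup \<psi> e) * diff_act (uv_mono n b (i - 1 - b)) (p j)"
      then show ?thesis
        using p by (simp add: lin.span_scale)
    qed (simp add: lin.span_zero)
  qed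
  finally show ?thesis .
qed

lemma homog_uv_in_span_p:
  assumes "d = n + 1" "homog_in {n+1, n+2} n q"
  shows "q \<in> lin.span (p ` {..n})"
proof -
  have "q \<in> lin.span (p ` {..<n+1})"
    by (rule homog_uv_in_span_if_lin_indep[OF lin_indep_fam_p _ assms(2)]) (use homog_p assms(1) in auto)
  then show ?thesis
    by (simp only: Suc_eq_plus1[symmetric] lessThan_Suc_atMost)
qed

definition shifted_p :: "nat \<Rightarrow> 'a mpoly set" where
  "shifted_p i = (\<lambda>(b, j). diff_act (uv_mono n b (i - 1 - b)) (p j)) ` ({..i - 1} \<times> {..n})"

lemma shifted_p_subset_phi_image:
  assumes "1 \<le> i"
  shows "shifted_p i \<subseteq> phi ` Rdeg n i"
proof
  fix x assume "x \<in> shifted_p i"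
  then obtain b j where bj: "b \<le> i - 1" "j \<le> n" "x = diff_act (uv_mono n b (i - 1 - b)) (p j)"
    unfolding shifted_p_def by auto
  have "mvar j * uv_mono n b (i - 1 - b) \<in> Rdeg n (1 + (i - 1))"
    using bj by (intro Rdeg_mult mvar_Rdeg uv_mono_Rdeg) auto
  moreover have "phi (mvar j * uv_mono n b (i - 1 - b)) = x"
    using diff_mvar_mult_f[OF bj(2)] bj(3) by simp
  ultimately show "x \<in> phi ` Rdeg n i"
    using assms by (metis image_eqI le_add_diff_inverse)
qed

lemma homog_diff_uv_mono_p:
  assumes "1 \<le> i" "b \<le> i - 1" "j \<le> n"
  shows "homog_in {n+1, n+2} (d - i) (diff_act (uv_mono n b (i - 1 - b)) (p j))"
proof -
  have "homog_in {n+1, n+2} (i - 1) (uv_mono n b (i - 1 - b))"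
    using assms(2) by (intro homog_uv_mono) simp
  then have "homog_in {n+1, n+2} ((d - 1) - (i - 1)) (diff_act (uv_mono n b (i - 1 - b)) (p j))"
    by (rule homog_diff_act(1)[OF homog_p[OF assms(3)]])
  then show ?thesis
    using assms(1) by simp
qed

lemma homog_shifted_p: "1 \<le> i \<Longrightarrow> x \<in> shifted_p i \<Longrightarrow> homog_in {n+1, n+2} (d - i) x"
  unfolding shifted_p_def using homog_diff_uv_mono_p by auto

text \<open>For \<open>2 \<le> i \<le> d\<close>, an annihilator of all of \<open>shifted_p i\<close> would contradict
  \<open>kills_p_shifts_eq_0\<close>.\<close>

lemma homog_uv_in_span_shifted_p:
  assumes i: "2 \<le> i \<or> (d = n + 1 \<and> i = 1)" "i \<le> d" and q: "homog_in {n+1, n+2} (d - i) q"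
  shows "q \<in> lin.span (shifted_p i)"
proof (cases "2 \<le> i")
  case True
  show ?thesis
  proof (rule ccontr)
    assume "q \<notin> lin.span (shifted_p i)"
    moreover have "finite (shifted_p i)"
      by (simp add: shifted_p_def)
    ultimately obtain E where E: "homog_in {n+1, n+2} (d - i) E" "E \<noteq> 0" "\<forall>b\<in>shifted_p i. diff_act E b = 0"
      using annihilator_of_span[of "shifted_p i" n "d - i" q] homog_shifted_p q True by auto
    have kills: "kills_p (E * uv_mono n b (i - 1 - b))" if "b \<le> i - 1" for b
      using E(3) that unfolding kills_p_def shifted_p_def by (auto simp: diff_act_mult)
    have "d - 1 - (d - i) = i - 1"
      using \<open>i \<le> d\<close> True by simp
    then have "E = 0"
      using kills_p_shifts_eq_0[OF E(1)] kills[of "i - 1"] kills[of 0] True \<open>i \<le> d\<close> by simp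
    then show False
      using E(2) by simp
  qed
next
  case False
  then have "d = n + 1" "i = 1"
    using i by auto
  then have "p ` {..n} \<subseteq> shifted_p i"
    unfolding shifted_p_def by (force simp: diff_act_1)
  moreover have "q \<in> lin.span (p ` {..n})"
    using homog_uv_in_span_p[OF \<open>d = n + 1\<close>] q \<open>i = 1\<close> \<open>d = n + 1\<close> by simp
  ultimately show ?thesis
    using lin.span_mono by blast
qed

lemma homog_uv_in_phi_image:
  assumes "2 \<le> i \<or> (d = n + 1 \<and> i = 1)" "i \<le> d" "homog_in {n+1, n+2} (d - i) q"
  shows "q \<in> phi ` Rdeg n i"
proof -
  have "1 \<le> i"
    using assms(1) by auto
  then show ?thesis
    using homog_uv_in_span_shifted_p[OF assms] phi_image_span[OF shifted_p_subset_phi_image] by blast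
qed

lemma exists_phi_preimages:
  assumes "2 \<le> i \<or> (d = n + 1 \<and> i = 1)" "i \<le> d"
  obtains \<theta> where "\<And>a. a \<le> d - i \<Longrightarrow> \<theta> a \<in> Rdeg n i \<and> phi (\<theta> a) = uv_mono n a (d - i - a)"
proof -
  have "uv_mono n a (d - i - a) \<in> phi ` Rdeg n i" if "a \<le> d - i" for a
    using that by (intro homog_uv_in_phi_image[OF assms] homog_uv_mono) simp
  then have "\<exists>\<theta>. \<theta> \<in> Rdeg n i \<and> phi \<theta> = uv_mono n a (d - i - a)" if "a \<le> d - i" for a
    using that by (metis imageE)
  then have "\<forall>a. \<exists>\<theta>. a \<le> d - i \<longrightarrow> \<theta> \<in> Rdeg n i \<and> phi \<theta> = uv_mono n a (d - i - a)"
    by blast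
  then obtain \<theta> where "\<forall>a. a \<le> d - i \<longrightarrow> \<theta> a \<in> Rdeg n i \<and> phi (\<theta> a) = uv_mono n a (d - i - a)"
    by (rule choice[THEN exE])
  then show ?thesis
    using that by blast
qed

end
context perazzo
begin

lemma hbasis_0: "hbasis n f 0 1 (\<lambda>_. 1)"
  unfolding hbasis_def
proof (intro conjI ballI allI impI)
  show "j < 1 \<Longrightarrow> 1 \<in> Rdeg n 0" for j :: nat
    by (simp add: Rdeg_def homog_in_def mono_deg_def)
  show "lin_indep_fam (\<lambda>j. phi 1) 1"
    unfolding lin_indep_fam_def diff_act_1 using f_nonzero by (auto simp: mconst_eq_0_iff)
  fix \<psi> :: "'a mpoly" assume "\<psi> \<in> Rdeg n 0"
  then have "\<psi> = mconst (Poly_Mapping.lookup \<psi> 0) * 1"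
    using homog_0_eq_mconst unfolding Rdeg_def by auto
  then have "phi \<psi> = mconst (Poly_Mapping.lookup \<psi> 0) * phi 1"
    by (metis diff_act_scale_left)
  then show "phi \<psi> \<in> lin.span ((\<lambda>j::nat. phi 1) ` {..<1})"
    by (auto intro: lin.span_scale lin.span_base)
qed

lemma hbasis_beyond_socle: "d < i \<Longrightarrow> hbasis n f i 0 \<theta>"
  unfolding hbasis_def lin_indep_fam_def
  using homog_diff_act(2)[OF homog_f] by (auto simp: Rdeg_def lin.span_zero)

lemma hbasis_socle: "\<exists>\<theta>. hbasis n f d 1 \<theta>"
proof -
  have "uv_mono n 0 0 \<in> phi ` Rdeg n d"
    using d_ge_4 by (intro homog_uv_in_phi_image homog_uv_mono) auto
  then obtain \<theta>0 where \<theta>0: "\<theta>0 \<in> Rdeg n d" "phi \<theta>0 = 1"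
    by auto
  have "hbasis n f d 1 (\<lambda>_. \<theta>0)"
    unfolding hbasis_def
  proof (intro conjI ballI allI impI)
    show "lin_indep_fam (\<lambda>j. phi \<theta>0) 1"
      unfolding lin_indep_fam_def \<theta>0(2) by (auto simp: mconst_eq_0_iff)
    fix \<psi> :: "'a mpoly" assume "\<psi> \<in> Rdeg n d"
    then have "homog_in {..n+2} (d - d) (phi \<psi>)"
      using homog_diff_act(1)[OF homog_f] unfolding Rdeg_def by blast
    then have "phi \<psi> = mconst (Poly_Mapping.lookup (phi \<psi>) 0) * 1"
      using homog_0_eq_mconst by simp
    moreover have "phi \<theta>0 \<in> lin.span ((\<lambda>j::nat. phi \<theta>0) ` {..<1})"
      by (rule lin.span_base) auto
    ultimately show "phi \<psi> \<in> lin.span ((\<lambda>j::nat. phi \<theta>0) ` {..<1})"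
      using \<theta>0(2) by (metis lin.span_scale)
  qed (use \<theta>0 in auto)
  then show ?thesis
    by blast
qed

lemma homog_uv_in_span_of_preimages:
  assumes "\<And>a. a \<le> k \<Longrightarrow> phi (\<theta> a) = uv_mono n a (k - a)" "homog_in {n+1, n+2} k q"
  shows "q \<in> lin.span ((\<lambda>j. phi (\<theta> j)) ` {..<k+1} \<union> B)"
proof -
  have "uv_mono n a (k - a) \<in> (\<lambda>j. phi (\<theta> j)) ` {..<k+1} \<union> B" if "a \<le> k" for a
    using assms(1)[OF that, symmetric] that by auto
  then have "uv_monos n k \<subseteq> (\<lambda>j. phi (\<theta> j)) ` {..<k+1} \<union> B"
    unfolding uv_monos_def by blast
  then show ?thesis
    using homog_uv_in_span[OF assms(2)] lin.span_mono by blast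
qed

lemma sum_phi_uv_mono_eq:
  "(\<Sum>j<k+1. mconst (c j) * phi (uv_mono n j (k - j))) = phi (uv_form n k c)"
  unfolding uv_form_def diff_act_lincomb by (simp only: Suc_eq_plus1[symmetric] lessThan_Suc_atMost)

lemma sum_phi_preimages_eq:
  assumes "\<And>a. a \<le> k \<Longrightarrow> phi (\<theta> a) = uv_mono n a (k - a)"
  shows "(\<Sum>j<k+1. mconst (c j) * phi (\<theta> j)) = uv_form n k c"
  unfolding uv_form_def Suc_eq_plus1[symmetric] lessThan_Suc_atMost using assms by simp

text \<open>In the middle degrees \<open>\<theta> \<circ> f\<close> ranges over all binary forms of degree \<open>d - i\<close> plus the
  \<open>i + 1\<close> forms \<open>U\<^sup>aV\<^sup>i\<^sup>-\<^sup>a \<circ> f\<close>, independent modulo those by \<open>kills_p_eq_0\<close>.\<close>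

lemma hbasis_middle:
  assumes i: "1 \<le> i" "i < d" and inj: "i + 2 \<le> d \<or> d = n + 1" and full: "2 \<le> i \<or> d = n + 1"
  shows "\<exists>\<theta>. hbasis n f i (d + 2) \<theta>"
proof -
  have "2 \<le> i \<or> (d = n + 1 \<and> i = 1)" "i \<le> d"
    using full i by auto
  then obtain \<theta>b where \<theta>b: "\<And>a. a \<le> d - i \<Longrightarrow> \<theta>b a \<in> Rdeg n i \<and> phi (\<theta>b a) = uv_mono n a (d - i - a)"
    using exists_phi_preimages by blast
  define k where "k = d - i"
  have \<theta>b_phi: "\<And>a. a \<le> k \<Longrightarrow> phi (\<theta>b a) = uv_mono n a (k - a)"
    using \<theta>b unfolding k_def by blast
  have "hbasis n f i ((k + 1) + (i + 1)) (\<lambda>j. if j < k + 1 then \<theta>b j else uv_mono n (j - (k + 1)) (i - (j - (k + 1))))"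
  proof (rule hbasis_join)
    show "\<forall>j<k+1. \<theta>b j \<in> Rdeg n i"
      using \<theta>b unfolding k_def by auto
    show "\<forall>j<i+1. uv_mono n j (i - j) \<in> Rdeg n i"
      by (auto intro: uv_mono_Rdeg)
  next
    fix c c' assume "(\<Sum>j<k+1. mconst (c j) * phi (\<theta>b j)) + (\<Sum>j<i+1. mconst (c' j) * phi (uv_mono n j (i - j))) = 0"
    then have s: "uv_form n k c + phi (uv_form n i c') = 0"
      by (simp only: sum_phi_preimages_eq[OF \<theta>b_phi] sum_phi_uv_mono_eq)
    have "uv_form n i c' = 0"
      using uv_form_eq_0_if_phi_eq[OF homog_uv_form s] inj i by fastforce
    then show "(\<forall>j<k+1. c j = 0) \<and> (\<forall>j<i+1. c' j = 0)"
      using s uv_form_eq_0D[of n k c] uv_form_eq_0D[of n i c'] by auto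
  next
    fix \<psi> :: "'a mpoly" assume "\<psi> \<in> Rdeg n i"
    let ?B = "(\<lambda>j. phi (\<theta>b j)) ` {..<k+1} \<union> (\<lambda>j. phi (uv_mono n j (i - j))) ` {..<i+1}"
    show "phi \<psi> \<in> lin.span ?B"
    proof (rule phi_in_span[OF _ _ \<open>\<psi> \<in> Rdeg n i\<close>])
      show "phi (uv_mono n a (i - a)) \<in> lin.span ?B" if "a \<le> i" for a
        using that by (intro lin.span_base) auto
      show "diff_act (uv_mono n b (i - 1 - b)) (p j) \<in> lin.span ?B"
        if "j \<le> n" "1 \<le> i" "b \<le> i - 1" for j b
        using homog_uv_in_span_of_preimages[OF \<theta>b_phi homog_diff_uv_mono_p[OF that(2,3,1), folded k_def]]
        by blast
    qed
  qed
  moreover have "(k + 1) + (i + 1) = d + 2"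
    using i by (simp add: k_def)
  ultimately show ?thesis
    by auto
qed

end
context perazzo
begin

lemma hbasis_1_top:
  assumes d: "d = n + 2"
  shows "\<exists>\<theta>. hbasis n f 1 (n + 3) \<theta>"
proof -
  have "hbasis n f 1 ((n + 1) + (1 + 1)) (\<lambda>j. if j < n + 1 then mvar j else uv_mono n (j - (n + 1)) (1 - (j - (n + 1))))"
  proof (rule hbasis_join)
    show "\<forall>j<n+1. mvar j \<in> Rdeg n 1"
      by (intro allI impI mvar_Rdeg) linarith
    show "\<forall>j<1+1. uv_mono n j (1 - j) \<in> Rdeg n 1"
      by (auto intro: uv_mono_Rdeg)
  next
    fix c c' assume s0: "(\<Sum>j<n+1. mconst (c j) * phi (mvar j)) + (\<Sum>j<1+1. mconst (c' j) * phi (uv_mono n j (1 - j))) = 0"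
    have "(\<Sum>j<n+1. mconst (c j) * phi (mvar j)) = (\<Sum>j\<le>n. mconst (c j) * p j)"
      unfolding Suc_eq_plus1[symmetric] lessThan_Suc_atMost by (rule sum.cong) (simp_all add: diff_mvar_f)
    then have s: "(\<Sum>j\<le>n. mconst (c j) * p j) + phi (uv_form n 1 c') = 0"
      using s0 by (simp only: sum_phi_uv_mono_eq)
    have "homog_in {n+1, n+2} (d - 1) (\<Sum>j\<le>n. mconst (c j) * p j)"
      by (intro homog_sum homog_scale homog_p) simp
    then have "uv_form n 1 c' = 0"
      using d n_gt_2 by (intro uv_form_eq_0_if_phi_eq[OF _ s]) simp_all
    then have "(\<Sum>j\<le>n. mconst (c j) * p j) = 0"
      using s by simp
    then have "\<forall>j\<le>n. c j = 0"
      by (rule lin_indep_p)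
    then show "(\<forall>j<n+1. c j = 0) \<and> (\<forall>j<1+1. c' j = 0)"
      using uv_form_eq_0D[OF \<open>uv_form n 1 c' = 0\<close>] by auto
  next
    fix \<psi> :: "'a mpoly" assume "\<psi> \<in> Rdeg n 1"
    let ?B = "(\<lambda>j. phi (mvar j)) ` {..<n+1} \<union> (\<lambda>j. phi (uv_mono n j (1 - j))) ` {..<1+1}"
    show "phi \<psi> \<in> lin.span ?B"
    proof (rule phi_in_span[OF _ _ \<open>\<psi> \<in> Rdeg n 1\<close>])
      fix a :: nat assume "a \<le> 1"
      then show "phi (uv_mono n a (1 - a)) \<in> lin.span ?B"
        by (intro lin.span_base UnI2 image_eqI[of _ _ a]) auto
    next
      fix j b :: nat assume "j \<le> n" "b \<le> 1 - 1"
      then have "diff_act (uv_mono n b (1 - 1 - b)) (p j) = phi (mvar j)"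
        by (simp add: diff_act_1 diff_mvar_f)
      also have "\<dots> \<in> lin.span ?B"
        using \<open>j \<le> n\<close> by (intro lin.span_base UnI1 image_eqI[of _ _ j]) auto
      finally show "diff_act (uv_mono n b (1 - 1 - b)) (p j) \<in> lin.span ?B" .
    qed
  qed
  moreover have "(n + 1) + (1 + 1) = n + 3"
    by simp
  ultimately show ?thesis
    by metis
qed

text \<open>A form \<open>D\<^sub>0\<close> of degree \<open>k\<close> killing all \<open>p\<^sub>j\<close> has \<open>D\<^sub>0 \<circ> f = D\<^sub>0 \<circ> g\<close>; expanding \<open>D\<^sub>0\<close>
  in monomials expresses one \<open>U\<^sup>aV\<^sup>k\<^sup>-\<^sup>a \<circ> f\<close> through the others and a form of degree
  \<open>d - k\<close>.\<close>

lemma phi_uv_mono_in_span_if_kills_p: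
  assumes D0: "homog_in {n+1, n+2} k D0" "kills_p D0"
    and a0: "a0 \<le> k" "Poly_Mapping.lookup D0 (uv_exp n a0 (k - a0)) \<noteq> 0"
    and g: "diff_act D0 g \<in> lin.span B"
    and others: "\<And>a. a \<le> k \<Longrightarrow> a \<noteq> a0 \<Longrightarrow> phi (uv_mono n a (k - a)) \<in> lin.span B"
  shows "phi (uv_mono n a0 (k - a0)) \<in> lin.span B"
proof -
  define \<delta> where "\<delta> a = Poly_Mapping.lookup D0 (uv_exp n a (k - a))" for a
  define R where "R = (\<Sum>a\<in>{..k} - {a0}. mconst (\<delta> a) * phi (uv_mono n a (k - a)))"
  have "phi D0 = diff_act D0 g"
    using phi_uv_eq[OF D0(1)] D0(2) unfolding kills_p_def by simp
  moreover have "phi D0 = phi (uv_form n k \<delta>)"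
    using uv_form_eq[OF D0(1)] unfolding \<delta>_def by simp
  moreover have "phi (uv_form n k \<delta>) = mconst (\<delta> a0) * phi (uv_mono n a0 (k - a0)) + R"
    unfolding uv_form_def diff_act_lincomb R_def using a0(1) by (subst sum.remove[of _ a0]) auto
  ultimately have "mconst (\<delta> a0) * phi (uv_mono n a0 (k - a0)) = diff_act D0 g - R"
    by (simp add: algebra_simps)
  also have "\<dots> \<in> lin.span B"
    unfolding R_def using g others by (intro lin.span_diff lin.span_sum lin.span_scale) auto
  finally have "mconst (inverse (\<delta> a0)) * (mconst (\<delta> a0) * phi (uv_mono n a0 (k - a0))) \<in> lin.span B"
    by (rule lin.span_scale)
  then show ?thesis
    using mconst_inverse_cancel a0(2) unfolding \<delta>_def by simp
qed

end

definition skip :: "nat \<Rightarrow> nat \<Rightarrow> nat" where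
  "skip a0 j = (if j < a0 then j else j + 1)"

lemma inj_on_skip: "inj_on (skip a0) A"
  unfolding skip_def by (auto intro!: inj_onI split: if_splits)

lemma skip_neq: "skip a0 j \<noteq> a0"
  unfolding skip_def by simp

lemma skip_le: "j < k \<Longrightarrow> a0 \<le> k \<Longrightarrow> skip a0 j \<le> k"
  unfolding skip_def by simp

lemma skip_pred: "a \<noteq> a0 \<Longrightarrow> a = skip a0 (if a < a0 then a else a - 1)"
  unfolding skip_def by auto

context perazzo
begin

text \<open>A basis is given by \<open>\<theta>b\<close>
  together with the monomials \<open>U\<^sup>aV\<^sup>n\<^sup>+\<^sup>1\<^sup>-\<^sup>a\<close>, \<open>a \<noteq> a\<^sub>0\<close>, enumerated by \<open>skip a\<^sub>0\<close>.\<close>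

context
  fixes D0 :: "'a mpoly" and a0 :: nat and \<theta>b :: "nat \<Rightarrow> 'a mpoly"
  assumes d: "d = n + 2"
    and D0: "homog_in {n+1, n+2} (n+1) D0" "kills_p D0"
    and a0: "a0 \<le> n + 1" "Poly_Mapping.lookup D0 (uv_exp n a0 (n + 1 - a0)) \<noteq> 0"
    and \<theta>b_phi: "\<And>a. a \<le> 1 \<Longrightarrow> phi (\<theta>b a) = uv_mono n a (1 - a)"
begin

lemma penultimate_lin_indep:
  assumes "(\<Sum>j<1+1. mconst (c j) * phi (\<theta>b j))
           + (\<Sum>j<n+1. mconst (c' j) * phi (uv_mono n (skip a0 j) (n + 1 - skip a0 j))) = 0"
  shows "(\<forall>j<1+1. c j = 0) \<and> (\<forall>j<n+1. c' j = 0)"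
proof -
  define D where "D = (\<Sum>j<n+1. mconst (c' j) * uv_mono n (skip a0 j) (n + 1 - skip a0 j))"
  have s: "uv_form n 1 c + phi D = 0"
    using assms unfolding D_def diff_act_lincomb by (simp only: sum_phi_preimages_eq[OF \<theta>b_phi])
  have "homog_in {n+1, n+2} (n+1) D"
    unfolding D_def using skip_le a0(1) by (intro homog_sum homog_scale homog_uv_mono) auto
  moreover have "kills_p D"
    by (rule kills_p_if_phi_eq[OF homog_uv_form s])
  moreover have "Poly_Mapping.lookup D (uv_exp n a0 (n + 1 - a0)) = 0"
    unfolding D_def using skip_neq by (intro lookup_uv_mono_comb_eq_0) blast
  ultimately have "D = 0"
    using kills_p_eq_0_top_coeff[OF d D0 _ _ a0] by blast
  have "c' j = 0" if "j < n + 1" for j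
    using lookup_uv_mono_comb[OF inj_on_skip[of a0 "{..<n+1}"] that, where c = c' and k = "n + 1" and n = n]
      \<open>D = 0\<close> unfolding D_def by simp
  then have "\<forall>j<n+1. c' j = 0"
    by blast
  moreover have "\<forall>j<1+1. c j = 0"
    using s \<open>D = 0\<close> uv_form_eq_0D[of n 1 c] by auto
  ultimately show ?thesis
    by blast
qed

lemma penultimate_span:
  assumes "\<psi> \<in> Rdeg n (n + 1)"
  shows "phi \<psi> \<in> lin.span ((\<lambda>j. phi (\<theta>b j)) ` {..<1+1}
                           \<union> (\<lambda>j. phi (uv_mono n (skip a0 j) (n + 1 - skip a0 j))) ` {..<n+1})"
    (is "_ \<in> lin.span ?B")
proof (rule phi_in_span[OF _ _ assms])
  have in_B: "phi (uv_mono n a (n + 1 - a)) \<in> lin.span ?B" if "a \<le> n + 1" "a \<noteq> a0" for a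
  proof -
    have "(if a < a0 then a else a - 1) < n + 1"
      using that a0(1) by auto
    then show ?thesis
      using skip_pred[OF that(2)] by (intro lin.span_base UnI2 image_eqI) auto
  qed
  fix a assume "a \<le> n + 1"
  show "phi (uv_mono n a (n + 1 - a)) \<in> lin.span ?B"
  proof (cases "a = a0")
    case True
    have "homog_in {n+1, n+2} 1 (diff_act D0 g)"
      using homog_diff_act(1)[OF homog_g D0(1)] d by simp
    then have "diff_act D0 g \<in> lin.span ?B"
      using homog_uv_in_span_of_preimages[OF \<theta>b_phi] by blast
    then show ?thesis
      using phi_uv_mono_in_span_if_kills_p[OF D0 a0] in_B True by blast
  qed (use in_B \<open>a \<le> n + 1\<close> in blast)
next
  fix j b assume "j \<le> n" "1 \<le> n + 1" "b \<le> n + 1 - 1"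
  then have "homog_in {n+1, n+2} 1 (diff_act (uv_mono n b (n + 1 - 1 - b)) (p j))"
    using homog_diff_uv_mono_p[of "n + 1" b j] d by simp
  then show "diff_act (uv_mono n b (n + 1 - 1 - b)) (p j) \<in> lin.span ?B"
    using homog_uv_in_span_of_preimages[OF \<theta>b_phi] by blast
qed

end

lemma hbasis_penultimate_top:
  assumes d: "d = n + 2"
  shows "\<exists>\<theta>. hbasis n f (n + 1) (n + 3) \<theta>"
proof -
  obtain D0 where D0: "homog_in {n+1, n+2} (n+1) D0" "D0 \<noteq> 0" "kills_p D0"
    using exists_kills_p_top[OF d] by blast
  obtain a0 where a0: "a0 \<le> n + 1" "Poly_Mapping.lookup D0 (uv_exp n a0 (n + 1 - a0)) \<noteq> 0"
    using exists_uv_coeff_nonzero[OF D0(1,2)] by blast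
  have "2 \<le> n + 1 \<or> (d = n + 1 \<and> n + 1 = 1)" "n + 1 \<le> d"
    using d n_gt_2 by auto
  then obtain \<theta>b where \<theta>b: "\<And>a. a \<le> d - (n + 1) \<Longrightarrow> \<theta>b a \<in> Rdeg n (n + 1) \<and> phi (\<theta>b a) = uv_mono n a (d - (n + 1) - a)"
    using exists_phi_preimages by blast
  have \<theta>b_phi: "\<And>a. a \<le> 1 \<Longrightarrow> phi (\<theta>b a) = uv_mono n a (1 - a)"
    using \<theta>b d by simp
  have "hbasis n f (n + 1) ((1 + 1) + (n + 1))
      (\<lambda>j. if j < 1 + 1 then \<theta>b j else uv_mono n (skip a0 (j - (1 + 1))) (n + 1 - skip a0 (j - (1 + 1))))"
  proof (rule hbasis_join)
    show "\<forall>j<1+1. \<theta>b j \<in> Rdeg n (n + 1)"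
      using \<theta>b d by auto
    show "\<forall>j<n+1. uv_mono n (skip a0 j) (n + 1 - skip a0 j) \<in> Rdeg n (n + 1)"
      using skip_le a0(1) by (auto intro: uv_mono_Rdeg)
  qed (use penultimate_lin_indep[OF d D0(1,3) a0 \<theta>b_phi] penultimate_span[OF d D0(1,3) a0 \<theta>b_phi] in auto)
  moreover have "(1 + 1) + (n + 1) = n + 3"
    by simp
  ultimately show ?thesis
    by metis
qed

end

context perazzo
begin

subsection \<open>Failure of the weak Lefschetz property\<close>

text \<open>Multiplication by any linear form \<open>l\<close> has a kernel from degree 2: \<open>l\<close> acts on binary
  forms through its \<open>U, V\<close>-part, which kills some binary form of degree \<open>d - 2\<close>, and every such
  form is some \<open>\<theta> \<circ> f\<close>.\<close>

lemma exists_phi_kernel_deg_2: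
  assumes l: "l \<in> Rdeg n 1"
  obtains \<theta>0 where "\<theta>0 \<in> Rdeg n 2" "phi \<theta>0 \<noteq> 0" "phi (l * \<theta>0) = 0"
proof -
  define L where "L = mconst (Poly_Mapping.lookup l (Poly_Mapping.single (n+1) 1)) * mvar (n+1)
                    + mconst (Poly_Mapping.lookup l (Poly_Mapping.single (n+2) 1)) * (mvar (n+2) :: 'a mpoly)"
  have "homog_in {n+1, n+2} 1 L"
    unfolding L_def using homog_mvar_iff[of "{n+1, n+2}" "n+1"] homog_mvar_iff[of "{n+1, n+2}" "n+2"]
    by (intro homog_add homog_scale) auto
  moreover have "d - 2 \<ge> 1"
    using d_ge_4 by simp
  ultimately obtain q0 where q0: "homog_in {n+1, n+2} (d - 2) q0" "q0 \<noteq> 0" "diff_act L q0 = 0"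
    by (rule exists_uv_form_killed_by_linear)
  have "q0 \<in> phi ` Rdeg n 2"
    using d_ge_4 q0(1) by (intro homog_uv_in_phi_image) auto
  then obtain \<theta>0 where \<theta>0: "\<theta>0 \<in> Rdeg n 2" "phi \<theta>0 = q0"
    by blast
  have "phi (l * \<theta>0) = diff_act l q0"
    using \<theta>0(2) by (simp add: diff_act_mult)
  also have "\<dots> = diff_act L q0"
    unfolding L_def using l q0(1) by (intro diff_act_linear_form_uv) (auto simp: Rdeg_def)
  finally show ?thesis
    using that \<theta>0 q0 by simp
qed

lemma not_has_WLP:
  assumes "hbasis n f 2 h \<theta>2" "hbasis n f 3 h \<theta>3"
  shows "\<not> has_WLP n f"
proof
  assume "has_WLP n f"
  then obtain l where l: "l \<in> Rdeg n 1" and WLP: "\<forall>i.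
      (\<forall>\<theta>\<in>Rdeg n i. l * \<theta> \<in> Ann n f \<longrightarrow> \<theta> \<in> Ann n f) \<or>
      (\<forall>\<psi>\<in>Rdeg n (Suc i). \<exists>\<theta>\<in>Rdeg n i. \<psi> - l * \<theta> \<in> Ann n f)"
    unfolding has_WLP_def by blast
  obtain \<theta>0 where \<theta>0: "\<theta>0 \<in> Rdeg n 2" "phi \<theta>0 \<noteq> 0" "phi (l * \<theta>0) = 0"
    using exists_phi_kernel_deg_2[OF l] by blast
  have "l * \<theta>0 \<in> Rdeg n 3"
    using Rdeg_mult[OF l \<theta>0(1)] by (simp add: numeral_3_eq_3)
  then have "l * \<theta>0 \<in> Ann n f" "\<theta>0 \<notin> Ann n f"
    using \<theta>0 by (simp_all add: Rdeg_Ann_iff)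
  then have "\<not> (\<forall>\<theta>\<in>Rdeg n 2. l * \<theta> \<in> Ann n f \<longrightarrow> \<theta> \<in> Ann n f)"
    using \<theta>0(1) by blast
  moreover have "\<not> (\<forall>\<psi>\<in>Rdeg n (Suc 2). \<exists>\<theta>\<in>Rdeg n 2. \<psi> - l * \<theta> \<in> Ann n f)"
    using assms by (intro not_mult_surj_if_kernel[OF _ _ l \<theta>0]) (simp_all add: numeral_3_eq_3)
  ultimately show False
    using WLP by blast
qed

lemma hvec_WLP_n1:
  assumes d: "d = n + 1"
  shows "(\<forall>i. hvec n f i = (if i = 0 then 1 else if i < d then n + 3 else if i = d then 1 else 0))
         \<and> \<not> has_WLP n f"
proof
  show "\<forall>i. hvec n f i = (if i = 0 then 1 else if i < d then n + 3 else if i = d then 1 else 0)"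
  proof
    fix i
    consider "i = 0" | "1 \<le> i" "i < d" | "i = d" | "d < i"
      by linarith
    then show "hvec n f i = (if i = 0 then 1 else if i < d then n + 3 else if i = d then 1 else 0)"
    proof cases
      case 2
      then obtain \<theta> where "hbasis n f i (d + 2) \<theta>"
        using hbasis_middle[of i] d by blast
      then have "hvec n f i = d + 2"
        by (rule hvec_eq_if_hbasis)
      then show ?thesis
        using 2 d by simp
    next
      case 3
      then show ?thesis
        using hbasis_socle d_ge_4 hvec_eq_if_hbasis by auto
    qed (use hvec_eq_if_hbasis[OF hbasis_0] hvec_eq_if_hbasis[OF hbasis_beyond_socle] in auto)
  qed
  show "\<not> has_WLP n f"
    using hbasis_middle[of 2] hbasis_middle[of 3] d d_ge_4 not_has_WLP by auto
qed

lemma hvec_WLP_n2: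
  assumes d: "d = n + 2"
  shows "(\<forall>i. hvec n f i = (if i = 0 then 1 else if i = 1 then n + 3 else if i < d - 1 then n + 4
                           else if i = d - 1 then n + 3 else if i = d then 1 else 0))
         \<and> \<not> has_WLP n f"
proof
  show "\<forall>i. hvec n f i = (if i = 0 then 1 else if i = 1 then n + 3 else if i < d - 1 then n + 4
                           else if i = d - 1 then n + 3 else if i = d then 1 else 0)"
  proof
    fix i
    consider "i = 0" | "i = 1" | "2 \<le> i" "i < d - 1" | "i = d - 1" | "i = d" | "d < i"
      using d_ge_4 by linarith
    then show "hvec n f i = (if i = 0 then 1 else if i = 1 then n + 3 else if i < d - 1 then n + 4
                             else if i = d - 1 then n + 3 else if i = d then 1 else 0)"
    proof cases
      case 2
      obtain \<theta> where "hbasis n f 1 (n + 3) \<theta>"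
        using hbasis_1_top[OF d] by blast
      then show ?thesis
        using 2 hvec_eq_if_hbasis by simp
    next
      case 3
      then obtain \<theta> where "hbasis n f i (d + 2) \<theta>"
        using hbasis_middle[of i] d by auto
      then have "hvec n f i = d + 2"
        by (rule hvec_eq_if_hbasis)
      then show ?thesis
        using 3 d by simp
    next
      case 4
      obtain \<theta> where "hbasis n f (n + 1) (n + 3) \<theta>"
        using hbasis_penultimate_top[OF d] by blast
      then show ?thesis
        using 4 d d_ge_4 hvec_eq_if_hbasis by simp
    next
      case 5
      then show ?thesis
        using hbasis_socle d_ge_4 hvec_eq_if_hbasis by auto
    qed (use d_ge_4 hvec_eq_if_hbasis[OF hbasis_0] hvec_eq_if_hbasis[OF hbasis_beyond_socle] in auto)
  qed
  show "\<not> has_WLP n f"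
    using hbasis_middle[of 2] hbasis_middle[of 3] d n_gt_2 not_has_WLP by auto
qed

end

theorem corollary4p7:
  fixes f :: "'a::field_char_0 mpoly" and n d :: nat
  assumes "algebraically_closed TYPE('a)"
    and "n > 2"
    and "is_perazzo n d f"
  shows "(d = n + 1 \<longrightarrow>
            (\<forall>i. hvec n f i = (if i = 0 then 1 else if i < d then n + 3 else if i = d then 1 else 0))
            \<and> \<not> has_WLP n f)
       \<and> (d = n + 2 \<longrightarrow>
            (\<forall>i. hvec n f i = (if i = 0 then 1 else if i = 1 then n + 3 else if i < d - 1 then n + 4
                               else if i = d - 1 then n + 3 else if i = d then 1 else 0))
            \<and> \<not> has_WLP n f)"
proof -
  obtain p g where p: "\<forall>i\<le>n. homog_in {n+1, n+2} (d - 1) (p i)"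
    and lin: "\<forall>c. (\<Sum>i\<le>n. mconst (c i) * p i) = 0 \<longrightarrow> (\<forall>i\<le>n. c i = 0)"
    and g: "homog_in {n+1, n+2} d g" and f: "f = (\<Sum>i\<le>n. mvar i * p i) + g"
    using assms(3) unfolding is_perazzo_def by blast
  have loc: "perazzo n d p g f" if "d = n + 1 \<or> d = n + 2"
    by unfold_locales (use assms(2) that p lin g f in auto)
  show ?thesis
    by (intro conjI impI perazzo.hvec_WLP_n1[OF loc] perazzo.hvec_WLP_n2[OF loc]) simp_all
qed

end
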